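(* Let $g:S\to T$ and $f:T\to U$ be non-degenerate nested tuple morphisms, with $g$ complementable (its underlying pointed map is injective). Then $\mathrm{coal}(L_{f\oslash g})=\mathrm{coal}(L_f\oslash L_g)$.
   Context: Nested tuples (of positive integers): a positive integer or a finite tuple of nested tuples; flattening $X^\flat$ (leaves left to right), $\mathrm{len}$, $\mathrm{entry}_i$, $\mathrm{size}$ = product of entries; depth, rank, modes as usual. $\langle n\rangle_*=\{*,1,\dots,n\}$. Layouts: $L=S:D$ with congruent $S$ (positive) and $D$ (nonnegative); $L^\flat=S^\flat:D^\flat$; concatenation $(L_1,\dots,L_k)=(S_1,\dots,S_k):(D_1,\dots,D_k)$. Layout function of flat $(s_i):(d_i)$: $\Phi(x)=\sum x_id_i$, $x_i=\lfloor x/(s_1\cdots s_{i-1})\rfloor\bmod s_i$ on $[0,\prod s_i)$; $\Phi_L=\Phi_{L^\flat}$. Flat operations: $\mathrm{squeeze}$ (remove modes with $s_i=1$), $\mathrm{sort}$ (stable reorder nondecreasing for $s:d\preceq s':d'$ iff $d<d'$ or ($d=d'$, $s\le s'$)), $\mathrm{coal}^\flat$ (squeeze, then repeatedly merge adjacent $s_i,s_{i+1}:d_i,s_id_i$ into $s_is_{i+1}:d_i$). A flat layout is coalesced if no $s_i=1$ and $s_id_i\ne d_{i+1}$. $\mathrm{coal}(L)$: with $\mathrm{coal}^\flat(L^\flat)=(s_1,\dots,s_k):(d_1,\dots,d_k)$, it is this flat layout if $k>1$, $s_1:d_1$ if $k=1$, $1:0$ if $k=0$. A layout is coalesced if it is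 $1:0$, or depth $0$ with shape $>1$, or depth $1$, rank $>1$, and coalesced as a flat layout. $N$-complement: for $A$ with $\mathrm{sort}(\mathrm{squeeze}(A^\flat))=(s_1,\dots,s_m):(d_1,\dots,d_m)$, $s_id_i\mid d_{i+1}$ and $s_md_m\mid N$, set $\mathrm{comp}(A,N)=\mathrm{coal}(\mathrm{coal}^\flat(C))$, $C=\bigl(d_1,\tfrac{d_2}{s_1d_1},\dots,\tfrac{N}{s_md_m}\bigr):(1,s_1d_1,\dots,s_md_m)$. Refinement: $X'$ refines $X$ if $X$ is an integer equal to $\mathrm{size}(X')$, or both are tuples of the same rank with modes refining modes; then $X'$ arises by replacing the $i$-th leaf of $X$ by a nested tuple $X'_i$, and for a layout $L=X':D$ its $i$-th relative mode is $X'_i:D_i$ ($D_i$ the corresponding part); $L$ is coalesced over $X$ if all relative modes are coalesced. Composition $B\circ A$: the unique layout $C$ with $\mathrm{shape}(C)$ refining $\mathrm{shape}(A)$, $C$ coalesced over $\mathrm{shape}(A)$, $\mathrm{Image}(\Phi_A)\subseteq[0,\mathrm{size}(B))$ and $\Phi_C=\Phi_B\circ\Phi_A$. Logical division: $A\oslash B=A\circ(B,\mathrm{comp}(B,\mathrm{size}(A)))$. Nested tuple morphisms $f:S\to T$ over pointed maps $\alpha$ (each $j\ne*$ at most one preimage, $\mathrm{entry}_i(S)=\mathrm{entry}_{\alpha(i)}(T)$ if $\alpha(i)\ne*$); composition over composite maps; $L_f$ has shape $S$ and stride with $i$-th flattened entry $0$ if $\alpha(i)=*$, else $\prod_{j<\alpha(i)}t_j$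 where $T^\flat=(t_1,\dots,t_n)$; non-degenerate: $\mathrm{entry}_i(S)=1\Rightarrow\alpha(i)=*$. For injective $g:S\to T$ over $\alpha$, with $j_1<\dots<j_k$ the indices not in $\mathrm{Image}(\alpha)$, $g^c:(t_{j_1},\dots,t_{j_k})\to T$ lies over $r\mapsto j_r$. Morphisms $g_1:S_1\to T$, $g_2:S_2\to T$ over $\alpha_1,\alpha_2$ with $\mathrm{Image}(\alpha_1)\cap\mathrm{Image}(\alpha_2)=\{*\}$ have concatenation $(g_1,g_2):(S_1,S_2)\to T$ over $i\mapsto\alpha_1(i)$ for $i\le\mathrm{len}(S_1)$, $\alpha_2(i-\mathrm{len}(S_1))$ otherwise. Logical division: $f\oslash g=f\circ(g,g^c)$. *)

theory Defs
  imports Main "HOL-Library.Product_Lexorder"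
begin

datatype ntuple = Leaf nat | Node "ntuple list"

fun flat :: "ntuple \<Rightarrow> nat list" where
  "flat (Leaf n) = [n]"
| "flat (Node xs) = concat (map flat xs)"

definition len :: "ntuple \<Rightarrow> nat" where
  "len X = length (flat X)"

definition tsize :: "ntuple \<Rightarrow> nat" where
  "tsize X = prod_list (flat X)"

fun depth :: "ntuple \<Rightarrow> nat" where
  "depth (Leaf n) = 0"
| "depth (Node xs) = Suc (fold max (map depth xs) 0)"

fun rank :: "ntuple \<Rightarrow> nat" where
  "rank (Leaf n) = 1"
| "rank (Node xs) = length xs"

definition positive_nt :: "ntuple \<Rightarrow> bool" where
  "positive_nt X \<longleftrightarrow> (\<forall>x \<in> set (flat X). 0 < x)"

fun congruent :: "ntuple \<Rightarrow> ntuple \<Rightarrow> bool" where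
  "congruent (Leaf _) (Leaf _) = True"
| "congruent (Node xs) (Node ys) = list_all2 congruent xs ys"
| "congruent _ _ = False"

fun refines :: "ntuple \<Rightarrow> ntuple \<Rightarrow> bool" where
  "refines X' (Leaf n) = (tsize X' = n)"
| "refines (Node xs') (Node xs) = list_all2 refines xs' xs"
| "refines (Leaf _) (Node _) = False"

fun fillT :: "ntuple \<Rightarrow> nat list \<Rightarrow> ntuple \<times> nat list"
and fillL :: "ntuple list \<Rightarrow> nat list \<Rightarrow> ntuple list \<times> nat list" where
  "fillT (Leaf _) ns = (Leaf (hd ns), tl ns)"
| "fillT (Node xs) ns = (let (ys, r) = fillL xs ns in (Node ys, r))"
| "fillL [] ns = ([], ns)"
| "fillL (x # xs) ns = (let (y, r) = fillT x ns; (ys, r') = fillL xs r in (y # ys, r'))"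

definition fill :: "ntuple \<Rightarrow> nat list \<Rightarrow> ntuple" where
  "fill X ns = fst (fillT X ns)"

text \<open>A layout is a pair (shape, stride) of nested tuples.\<close>
type_synonym layout = "ntuple \<times> ntuple"

definition valid_layout :: "layout \<Rightarrow> bool" where
  "valid_layout L \<longleftrightarrow> congruent (fst L) (snd L) \<and> positive_nt (fst L)"

definition lflat :: "layout \<Rightarrow> (nat \<times> nat) list" where
  "lflat L = zip (flat (fst L)) (flat (snd L))"

definition lsize :: "layout \<Rightarrow> nat" where
  "lsize L = tsize (fst L)"

definition lconcat :: "layout \<Rightarrow> layout \<Rightarrow> layout" where
  "lconcat L1 L2 = (Node [fst L1, fst L2], Node [snd L1, snd L2])"

definition phi_flat :: "(nat \<times> nat) list \<Rightarrow> nat \<Rightarrow> nat" where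
  "phi_flat sd x = (\<Sum>i<length sd.
      ((x div prod_list (take i (map fst sd))) mod fst (sd ! i)) * snd (sd ! i))"

definition phi :: "layout \<Rightarrow> nat \<Rightarrow> nat" where
  "phi L = phi_flat (lflat L)"

definition squeeze :: "(nat \<times> nat) list \<Rightarrow> (nat \<times> nat) list" where
  "squeeze sd = filter (\<lambda>(s, d). s \<noteq> 1) sd"

definition lsort :: "(nat \<times> nat) list \<Rightarrow> (nat \<times> nat) list" where
  "lsort sd = sort_key (\<lambda>(s, d). (d, s)) sd"

fun merge_modes :: "(nat \<times> nat) list \<Rightarrow> (nat \<times> nat) list" where
  "merge_modes ((s1, d1) # (s2, d2) # rest) =
     (if d2 = s1 * d1 then merge_modes ((s1 * s2, d1) # rest)
      else (s1, d1) # merge_modes ((s2, d2) # rest))"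
| "merge_modes sd = sd"

definition coal_flat :: "(nat \<times> nat) list \<Rightarrow> (nat \<times> nat) list" where
  "coal_flat sd = merge_modes (squeeze sd)"

definition flat_coalesced :: "(nat \<times> nat) list \<Rightarrow> bool" where
  "flat_coalesced sd \<longleftrightarrow> (\<forall>i < length sd. fst (sd ! i) \<noteq> 1)
     \<and> (\<forall>i. Suc i < length sd \<longrightarrow> fst (sd ! i) * snd (sd ! i) \<noteq> snd (sd ! Suc i))"

definition layout_of_flat :: "(nat \<times> nat) list \<Rightarrow> layout" where
  "layout_of_flat sd =
     (if length sd > 1 then (Node (map (Leaf \<circ> fst) sd), Node (map (Leaf \<circ> snd) sd))
      else if length sd = 1 then (Leaf (fst (hd sd)), Leaf (snd (hd sd)))
      else (Leaf 1, Leaf 0))"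

definition coal :: "layout \<Rightarrow> layout" where
  "coal L = layout_of_flat (coal_flat (lflat L))"

definition coalesced :: "layout \<Rightarrow> bool" where
  "coalesced L \<longleftrightarrow> L = (Leaf 1, Leaf 0)
     \<or> (depth (fst L) = 0 \<and> tsize (fst L) > 1)
     \<or> (depth (fst L) = 1 \<and> rank (fst L) > 1 \<and> flat_coalesced (lflat L))"

lemma coal_over_term_aux:
  "i < length (xs :: ntuple list) \<Longrightarrow> size (xs ! i) < Suc (size_list size xs)"
  using nth_mem[of i xs] size_list_estimation'[of "xs ! i" xs "size (xs ! i)" size] by simp

function coalesced_over :: "ntuple \<Rightarrow> ntuple \<Rightarrow> ntuple \<Rightarrow> bool" where
  "coalesced_over X' D (Leaf n) = coalesced (X', D)"
| "coalesced_over (Node xs') (Node ds) (Node xs) =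
     (length xs' = length xs \<and> length ds = length xs \<and>
      (\<forall>i < length xs. coalesced_over (xs' ! i) (ds ! i) (xs ! i)))"
| "coalesced_over (Leaf a) D (Node xs) = False"
| "coalesced_over (Node xs') (Leaf d) (Node xs) = False"
  by pat_completeness auto
termination
  by (relation "measure (\<lambda>(_, _, x). size x)")
     (auto simp: coal_over_term_aux)


definition lcomplement :: "layout \<Rightarrow> nat \<Rightarrow> layout" where
  "lcomplement A N =
     (let sd = lsort (squeeze (lflat A));
          ps = map (\<lambda>(s, d). s * d) sd;
          strides = 1 # ps;
          shapes = map2 (div) (map snd sd @ [N]) strides
      in coal (layout_of_flat (coal_flat (zip shapes strides))))"

definition lcompose :: "layout \<Rightarrow> layout \<Rightarrow> layout" where
  "lcompose B A = (THE C. valid_layout C \<and> refines (fst C) (fst A)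
      \<and> coalesced_over (fst C) (snd C) (fst A)
      \<and> (\<forall>x < lsize A. phi A x < lsize B)
      \<and> (\<forall>x < lsize A. phi C x = phi B (phi A x)))"

definition ldivide :: "layout \<Rightarrow> layout \<Rightarrow> layout" where
  "ldivide A B = lcompose A (lconcat B (lcomplement B (lsize A)))"

text \<open>A morphism (S, T, \<alpha>): flattened indices are 0-based, None plays the role of *.\<close>
type_synonym morph = "ntuple \<times> ntuple \<times> (nat \<Rightarrow> nat option)"

definition is_morph :: "morph \<Rightarrow> bool" where
  "is_morph f = (case f of (S, T, \<alpha>) \<Rightarrow>
      positive_nt S \<and> positive_nt T
    \<and> (\<forall>i. len S \<le> i \<longrightarrow> \<alpha> i = None)
    \<and> (\<forall>i j. i < len S \<and> \<alpha> i = Some j \<longrightarrow> j < len T \<and> flat S ! i = flat T ! j)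
    \<and> (\<forall>i i' j. i < len S \<and> i' < len S \<and> \<alpha> i = Some j \<and> \<alpha> i' = Some j \<longrightarrow> i = i'))"

definition mdom :: "morph \<Rightarrow> ntuple" where "mdom f = fst f"
definition mcod :: "morph \<Rightarrow> ntuple" where "mcod f = fst (snd f)"
definition mmap :: "morph \<Rightarrow> nat \<Rightarrow> nat option" where "mmap f = snd (snd f)"

definition non_degenerate :: "morph \<Rightarrow> bool" where
  "non_degenerate f \<longleftrightarrow> (\<forall>i < len (mdom f). flat (mdom f) ! i = 1 \<longrightarrow> mmap f i = None)"

text \<open>Complementable: the underlying pointed map is injective (no non-* index goes to *).\<close>
definition complementable :: "morph \<Rightarrow> bool" where
  "complementable g \<longleftrightarrow> (\<forall>i < len (mdom g). mmap g i \<noteq> None)"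

definition mcompose :: "morph \<Rightarrow> morph \<Rightarrow> morph" where
  "mcompose f g = (mdom g, mcod f,
     \<lambda>i. case mmap g i of None \<Rightarrow> None | Some j \<Rightarrow> mmap f j)"

definition mlayout :: "morph \<Rightarrow> layout" where
  "mlayout f = (mdom f, fill (mdom f)
     (map (\<lambda>i. case mmap f i of None \<Rightarrow> 0
                | Some j \<Rightarrow> prod_list (take j (flat (mcod f)))) [0..<len (mdom f)]))"

definition missing_idx :: "morph \<Rightarrow> nat list" where
  "missing_idx g = filter (\<lambda>j. j \<notin> the ` (mmap g ` {..<len (mdom g)} - {None}))
                          [0..<len (mcod g)]"

definition mcomplement :: "morph \<Rightarrow> morph" where
  "mcomplement g = (let js = missing_idx g in
     (Node (map (\<lambda>j. Leaf (flat (mcod g) ! j)) js), mcod g,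
      \<lambda>r. if r < length js then Some (js ! r) else None))"

definition mconcat :: "morph \<Rightarrow> morph \<Rightarrow> morph" where
  "mconcat g1 g2 = (Node [mdom g1, mdom g2], mcod g1,
     \<lambda>i. if i < len (mdom g1) then mmap g1 i else mmap g2 (i - len (mdom g1)))"

definition mdivide :: "morph \<Rightarrow> morph \<Rightarrow> morph" where
  "mdivide f g = mcompose f (mconcat g (mcomplement g))"

end

theory Submission
  imports Defs "HOL-Library.Multiset"
begin

text \<open>
  Write \<open>a\<close> for the index map of \<open>g\<close> and \<open>w\<close> for the strides of \<open>L\<^sub>f\<close>. The image of \<open>a\<close> cuts the
  flat indices of \<open>T\<close> into gaps. Sorting the modes of \<open>L\<^sub>g\<close> by stride lists the image indices in
  increasing order, so the complement of \<open>L\<^sub>g\<close> has one mode per gap of size \<open>\<noteq> 1\<close>: the product of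
  the shapes of the gap, with the column-major stride of its first index. As a function,
  \<open>(L\<^sub>g, comp)\<close> is therefore the column-major layout of \<open>T\<close> with its indices permuted
  (image indices in the order of \<open>S\<close>, then the gaps), and composing \<open>L\<^sub>f\<close> with it permutes the
  modes of \<open>L\<^sub>f\<close> in the same way, each gap mode being refined into the modes of \<open>L\<^sub>f\<close> over the gap.
  Coalescing forgets this refinement and the shape-1 modes of the trivial gaps; what remains is
  \<open>L\<^sub>f\<close> on the image in the order of \<open>S\<close> followed by \<open>L\<^sub>f\<close> on the missing indices, the
  coalescence of \<open>L\<^bsub>f \<oslash> g\<^esub>\<close>.
\<close>

lemma prod_list_pos: "\<forall>x\<in>set xs. 0 < (x::nat) \<Longrightarrow> 0 < prod_list xs"
  by (induction xs) auto

lemma prod_list_eq1: "prod_list (xs::nat list) = 1 \<Longrightarrow> x \<in> set xs \<Longrightarrow> x = 1"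
  by (induction xs) auto

lemma prod_take_nth_less:
  assumes "\<forall>x\<in>set xs. 0 < (x::nat)" "i < length xs" "y < xs ! i"
  shows "y * prod_list (take i xs) < prod_list xs"
proof -
  have "0 < prod_list (take i xs)" "0 < prod_list (drop (Suc i) xs)"
    using assms(1) by (auto intro!: prod_list_pos dest: in_set_takeD in_set_dropD)
  then have "y * prod_list (take i xs) < xs ! i * prod_list (take i xs) * prod_list (drop (Suc i) xs)"
    using assms(3) by (simp add: less_le_trans)
  also have "\<dots> = prod_list xs"
    using assms(2) by (metis id_take_nth_drop mult.commute prod_list.Cons prod_list.append mult.assoc)
  finally show ?thesis .
qed

lemma zip_concat:
  "list_all2 (\<lambda>a b. length a = length b) as bs \<Longrightarrow>
   zip (concat as) (concat bs) = concat (map (\<lambda>(a, b). zip a b) (zip as bs))"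
  by (induction rule: list_all2_induct) auto

lemma concat_concat: "concat (concat xsss) = concat (map concat xsss)"
  by (induction xsss) auto

lemma zip_map_upt: "zip xs (map f [0..<length xs]) = map (\<lambda>i. (xs ! i, f i)) [0..<length xs]"
  by (intro nth_equalityI) auto

lemma concat_upt_gaps:
  "sorted_wrt (<) I \<Longrightarrow> \<forall>i\<in>set I. lo \<le> i \<and> i < m \<Longrightarrow>
   concat (map (\<lambda>(b,e). [b..<e]) (zip (lo # map Suc I) (I @ [m]))) = filter (\<lambda>j. j \<notin> set I) [lo..<m]"
proof (induction I arbitrary: lo)
  case Nil then show ?case by simp
next
  case (Cons i I)
  have IH: "concat (map (\<lambda>(b,e). [b..<e]) (zip (Suc i # map Suc I) (I @ [m]))) = filter (\<lambda>j. j \<notin> set I) [Suc i..<m]"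
    using Cons by (intro Cons.IH) auto
  have im: "lo \<le> i" "i < m" using Cons.prems by auto
  have split: "[lo..<m] = [lo..<i] @ i # [Suc i..<m]"
  proof -
    have "[lo..<m] = [lo..<i] @ [i..<m]" using upt_add_eq_append[of lo i "m - i"] im by simp
    then show ?thesis using im by (simp add: upt_conv_Cons)
  qed
  have f1: "filter (\<lambda>j. j \<notin> set (i # I)) [lo..<i] = [lo..<i]"
    using Cons.prems by (intro filter_True) auto
  have f2: "filter (\<lambda>j. j \<notin> set (i # I)) [Suc i..<m] = filter (\<lambda>j. j \<notin> set I) [Suc i..<m]"
    by (intro filter_cong) auto
  show ?case using IH split f1 f2 by simp
qed

lemma concat_map_filter_eq:
  "\<forall>x\<in>set xs. \<not> P x \<longrightarrow> f x = [] \<Longrightarrow> concat (map f (filter P xs)) = concat (map f xs)"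
  by (induction xs) auto

lemma mset_concat_filter:
  "mset (concat (map f (filter P xs))) + mset (concat (map f (filter (\<lambda>x. \<not> P x) xs))) = mset (concat (map f xs))"
  by (induction xs) auto

abbreviation fsize :: "(nat \<times> nat) list \<Rightarrow> nat" where
  "fsize sd \<equiv> prod_list (map fst sd)"

lemma phi_flat_Nil [simp]: "phi_flat [] x = 0"
  by (simp add: phi_flat_def)

lemma phi_flat_Cons: "phi_flat (p # sd) x = x mod fst p * snd p + phi_flat sd (x div fst p)"
  unfolding phi_flat_def length_Cons sum.lessThan_Suc_shift
  by (simp add: div_mult2_eq)

lemma phi_flat_append: "phi_flat (xs @ ys) x = phi_flat xs x + phi_flat ys (x div fsize xs)"
  by (induction xs arbitrary: x) (auto simp: phi_flat_Cons div_mult2_eq)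

lemma phi_flat_zero [simp]: "phi_flat sd 0 = 0"
  by (induction sd) (auto simp: phi_flat_Cons)

lemma phi_flat_ones: "\<forall>p\<in>set sd. fst p = 1 \<Longrightarrow> phi_flat sd x = 0"
  by (induction sd arbitrary: x) (auto simp: phi_flat_Cons)

lemma fsize_pos: "\<forall>p\<in>set sd. 0 < fst p \<Longrightarrow> 0 < fsize sd"
  by (induction sd) auto

lemma fsize_gt_1: "\<forall>p\<in>set sd. 1 < fst p \<Longrightarrow> sd \<noteq> [] \<Longrightarrow> 1 < fsize sd"
proof (induction sd)
  case (Cons p sd)
  then have "0 < fsize sd" by (intro fsize_pos) auto
  then show ?case using Cons.prems less_1_mult'[of "fst p" "fsize sd"] by simp
qed simp

lemma phi_flat_mod: "\<forall>p\<in>set sd. 0 < fst p \<Longrightarrow> phi_flat sd (x mod fsize sd) = phi_flat sd x"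
proof (induction sd arbitrary: x)
  case (Cons p sd)
  have s: "0 < fst p" using Cons.prems by simp
  have "x mod fsize (p # sd) = fst p * (x div fst p mod fsize sd) + x mod fst p"
    by (simp add: mod_mult2_eq)
  then show ?case using Cons s by (simp add: phi_flat_Cons)
qed simp

lemma squeeze_simps [simp]:
  "squeeze [] = []"
  "squeeze (xs @ ys) = squeeze xs @ squeeze ys"
  "squeeze (p # xs) = (if fst p = 1 then squeeze xs else p # squeeze xs)"
  by (auto simp: squeeze_def split: prod.splits)

lemma squeeze_concat: "squeeze (concat xss) = concat (map squeeze xss)"
  by (induction xss) auto

lemma phi_flat_squeeze: "phi_flat (squeeze sd) x = phi_flat sd x"
  by (induction sd arbitrary: x) (auto simp: phi_flat_Cons)

lemma fsize_squeeze: "fsize (squeeze sd) = fsize sd"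
  by (induction sd) auto

lemma set_squeezeD: "p \<in> set (squeeze sd) \<Longrightarrow> p \<in> set sd \<and> fst p \<noteq> 1"
  by (auto simp: squeeze_def)

lemma squeeze_id: "\<forall>p\<in>set sd. fst p \<noteq> 1 \<Longrightarrow> squeeze sd = sd"
  by (induction sd) auto

section \<open>Coalescing flat layouts\<close>

text \<open>\<open>merge_modes\<close> is a right fold of \<open>merge_step\<close>; in this form its compatibility with
  concatenation reduces to the associativity law \<open>merge_step_merge_step\<close>.\<close>

definition merge_step :: "nat \<times> nat \<Rightarrow> (nat \<times> nat) list \<Rightarrow> (nat \<times> nat) list" where
  "merge_step x sd = (case sd of [] \<Rightarrow> [x] | h # t \<Rightarrow>
     (if snd h = fst x * snd x then (fst x * fst h, snd x) # t else x # sd))"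

lemma merge_step_Nil [simp]: "merge_step x [] = [x]"
  by (simp add: merge_step_def)

lemma merge_step_Cons_snd: "\<exists>h t. merge_step y sd = h # t \<and> snd h = snd y"
  by (cases sd; cases y) (auto simp: merge_step_def)

lemma merge_step_merge_step:
  "snd y = fst x * snd x \<Longrightarrow> merge_step x (merge_step y sd) = merge_step (fst x * fst y, snd x) sd"
  by (cases sd) (auto simp: merge_step_def algebra_simps)

lemma merge_modes_Cons: "merge_modes (x # sd) = merge_step x (merge_modes sd)"
proof (induction sd arbitrary: x)
  case Nil
  then show ?case by (cases x) simp
next
  case (Cons y sd)
  show ?case
  proof (cases "snd y = fst x * snd x")
    case True
    then show ?thesis using Cons[of "(fst x * fst y, snd x)"] Cons[of y]
      by (cases x; cases y) (simp add: merge_step_merge_step)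
  next
    case False
    obtain h t where "merge_step y (merge_modes sd) = h # t" "snd h = snd y"
      using merge_step_Cons_snd by blast
    then show ?thesis using False Cons[of y] by (cases x; cases y) (simp add: merge_step_def)
  qed
qed

lemma merge_modes_foldr: "merge_modes sd = foldr merge_step sd []"
  by (induction sd) (auto simp: merge_modes_Cons)

lemma merge_step_foldr:
  "merge_step y (foldr merge_step xs ys) = foldr merge_step (merge_step y xs) ys"
proof (cases xs)
  case (Cons h t)
  show ?thesis
  proof (cases "snd h = fst y * snd y")
    case True
    then have "merge_step y xs = (fst y * fst h, snd y) # t"
      by (simp add: merge_step_def Cons)
    then show ?thesis by (simp add: Cons merge_step_merge_step[OF True])
  qed (simp add: merge_step_def Cons)
qed simp

lemma foldr_merge_step_normalize:
  "foldr merge_step xs ys = foldr merge_step (foldr merge_step xs []) ys"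
  by (induction xs) (auto simp: merge_step_foldr)

lemma merge_modes_append:
  "merge_modes (xs @ ys) = merge_modes (merge_modes xs @ merge_modes ys)"
  unfolding merge_modes_foldr foldr_append by (metis foldr_merge_step_normalize)

lemma phi_flat_merge_step: "phi_flat (merge_step x sd) y = phi_flat (x # sd) y"
proof (cases sd)
  case (Cons h t)
  show ?thesis
  proof (cases "snd h = fst x * snd x")
    case True
    have "y mod (fst x * fst h) * snd x
        = y mod fst x * snd x + y div fst x mod fst h * (fst x * snd x)"
      by (simp only: mod_mult2_eq) (simp add: algebra_simps)
    then show ?thesis using True Cons by (simp add: merge_step_def phi_flat_Cons div_mult2_eq)
  next
    case False
    then show ?thesis using Cons by (simp add: merge_step_def)
  qed
qed simp

lemma fsize_merge_step: "fsize (merge_step x sd) = fsize (x # sd)"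
  by (cases sd) (auto simp: merge_step_def)

lemma phi_flat_merge_modes: "phi_flat (merge_modes sd) y = phi_flat sd y"
  unfolding merge_modes_foldr
  by (induction sd arbitrary: y) (auto simp: phi_flat_merge_step phi_flat_Cons)

lemma fsize_merge_modes: "fsize (merge_modes sd) = fsize sd"
  unfolding merge_modes_foldr by (induction sd) (auto simp: fsize_merge_step)

lemma merge_step_invariant:
  assumes "P x" "\<forall>p\<in>set sd. P p" "\<And>a b. P a \<Longrightarrow> P b \<Longrightarrow> P (fst a * fst b, snd a)"
  shows "\<forall>p\<in>set (merge_step x sd). P p"
  using assms by (cases sd) (auto simp: merge_step_def)

lemma merge_modes_invariant:
  assumes "\<forall>p\<in>set sd. P p" and "\<And>a b. P a \<Longrightarrow> P b \<Longrightarrow> P (fst a * fst b, snd a)"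
  shows "\<forall>p\<in>set (merge_modes sd). P p"
  using assms(1) unfolding merge_modes_foldr
proof (induction sd)
  case (Cons x sd)
  then show ?case by (simp, intro merge_step_invariant) (use assms(2) in auto)
qed simp

fun unmergeable :: "(nat \<times> nat) list \<Rightarrow> bool" where
  "unmergeable (x # y # sd) = (snd y \<noteq> fst x * snd x \<and> unmergeable (y # sd))"
| "unmergeable _ = True"

lemma unmergeable_merge_step: "unmergeable sd \<Longrightarrow> unmergeable (merge_step x sd)"
  by (cases sd rule: unmergeable.cases) (auto simp: merge_step_def algebra_simps)

lemma unmergeable_merge_modes: "unmergeable (merge_modes sd)"
  unfolding merge_modes_foldr by (induction sd) (auto intro: unmergeable_merge_step)

lemma merge_modes_id: "unmergeable sd \<Longrightarrow> merge_modes sd = sd"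
  by (induction sd rule: merge_modes.induct) auto

lemma unmergeable_iff_nth:
  "unmergeable sd \<longleftrightarrow> (\<forall>i. Suc i < length sd \<longrightarrow> snd (sd ! Suc i) \<noteq> fst (sd ! i) * snd (sd ! i))"
proof (induction sd rule: unmergeable.induct)
  case (1 x y sd)
  then show ?case by (auto simp: nth_Cons split: nat.splits)
qed auto

lemma flat_coalesced_iff:
  "flat_coalesced sd \<longleftrightarrow> (\<forall>p\<in>set sd. fst p \<noteq> 1) \<and> unmergeable sd"
  unfolding flat_coalesced_def unmergeable_iff_nth all_set_conv_all_nth by metis

lemma flat_coalesced_shapes_gt_1:
  assumes "flat_coalesced sd" and "\<forall>p\<in>set sd. 0 < fst p"
  shows "\<forall>p\<in>set sd. 1 < fst p"
proof
  fix p assume "p \<in> set sd"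
  then have "0 < fst p" "fst p \<noteq> 1" using assms by (auto simp: flat_coalesced_iff)
  then show "1 < fst p" by simp
qed

lemma unmergeable_if_sorted_wrt:
  "sorted_wrt (\<lambda>x y. snd y \<noteq> fst x * snd x) sd \<Longrightarrow> unmergeable sd"
  by (induction sd rule: unmergeable.induct) auto

lemma coal_flat_no_ones: "\<forall>p\<in>set (coal_flat sd). fst p \<noteq> 1"
  unfolding coal_flat_def
  by (rule merge_modes_invariant[where P = "\<lambda>p. fst p \<noteq> 1"]) (auto dest: set_squeezeD)

lemma coal_flat_pos: "\<forall>p\<in>set sd. 0 < fst p \<Longrightarrow> \<forall>p\<in>set (coal_flat sd). 0 < fst p"
  unfolding coal_flat_def
  by (rule merge_modes_invariant[where P = "\<lambda>p. 0 < fst p"]) (auto dest: set_squeezeD)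

lemma flat_coalesced_coal_flat: "flat_coalesced (coal_flat sd)"
  using coal_flat_no_ones[of sd] by (simp add: flat_coalesced_iff coal_flat_def unmergeable_merge_modes)

lemma coal_flat_id: "flat_coalesced sd \<Longrightarrow> coal_flat sd = sd"
  by (simp add: flat_coalesced_iff coal_flat_def squeeze_id merge_modes_id)

lemma coal_flat_idem: "coal_flat (coal_flat sd) = coal_flat sd"
  by (rule coal_flat_id[OF flat_coalesced_coal_flat])

lemma coal_flat_append: "coal_flat (xs @ ys) = coal_flat (coal_flat xs @ coal_flat ys)"
proof -
  have "coal_flat (coal_flat xs @ coal_flat ys) = merge_modes (coal_flat xs @ coal_flat ys)"
    using coal_flat_no_ones[of xs] coal_flat_no_ones[of ys]
    by (simp add: coal_flat_def[of "_ @ _"] squeeze_id)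
  then show ?thesis by (simp add: coal_flat_def merge_modes_append[symmetric])
qed

lemma coal_flat_concat: "coal_flat (concat xss) = coal_flat (concat (map coal_flat xss))"
proof (induction xss)
  case (Cons xs xss)
  have "coal_flat (concat (xs # xss)) = coal_flat (coal_flat xs @ coal_flat (concat xss))"
    by (simp add: coal_flat_append[of xs])
  also have "\<dots> = coal_flat (coal_flat (coal_flat xs) @ coal_flat (concat (map coal_flat xss)))"
    using Cons by (simp add: coal_flat_idem)
  also have "\<dots> = coal_flat (concat (map coal_flat (xs # xss)))"
    by (simp add: coal_flat_append[of "coal_flat xs"])
  finally show ?case .
qed (simp add: coal_flat_def)

lemma coal_flat_append_concat_coal_flat:
  "coal_flat (xs @ concat (map coal_flat yss)) = coal_flat (xs @ concat yss)"
  using coal_flat_concat[of "xs # map coal_flat yss"] coal_flat_concat[of "xs # yss"]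
  by (simp add: coal_flat_idem o_def)

lemma phi_flat_coal_flat: "phi_flat (coal_flat sd) y = phi_flat sd y"
  by (simp add: coal_flat_def phi_flat_merge_modes phi_flat_squeeze)

lemma fsize_coal_flat: "fsize (coal_flat sd) = fsize sd"
  by (simp add: coal_flat_def fsize_merge_modes fsize_squeeze)

lemma coal_flat_neq_Nil: "fsize sd \<noteq> 1 \<Longrightarrow> coal_flat sd \<noteq> []"
  by (metis fsize_coal_flat prod_list.Nil list.simps(8))

definition flat_equiv :: "(nat \<times> nat) list \<Rightarrow> (nat \<times> nat) list \<Rightarrow> bool" where
  "flat_equiv u v \<longleftrightarrow> fsize u = fsize v \<and> phi_flat u = phi_flat v"

lemma flat_equiv_refl: "flat_equiv u u"
  by (simp add: flat_equiv_def)

lemma flat_equiv_concat: "list_all2 flat_equiv us vs \<Longrightarrow> flat_equiv (concat us) (concat vs)"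
  by (induction rule: list_all2_induct) (auto simp: flat_equiv_def phi_flat_append fun_eq_iff)

lemma flat_equiv_coal_flat: "flat_equiv (coal_flat sd) sd"
  by (simp add: flat_equiv_def fsize_coal_flat phi_flat_coal_flat fun_eq_iff)

text \<open>At \<open>x = s\<close> the left layout enters its second mode, whose stride differs from \<open>s * d\<close> by
  unmergeability, while the right layout is still in its first mode.\<close>

lemma unmergeable_first_shape_le:
  assumes "\<forall>p\<in>set xs. 1 < fst p" "unmergeable ((s, d) # xs)" "1 < s"
    and "\<forall>p\<in>set ys. 0 < fst p" "fsize ((s, d) # xs) = fsize ((s', d) # ys)"
    and "\<forall>y < fsize ((s, d) # xs). phi_flat ((s, d) # xs) y = phi_flat ((s', d) # ys) y"
  shows "s' \<le> s"
proof (rule ccontr)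
  assume "\<not> s' \<le> s"
  then have less: "s < s'" by simp
  show False
  proof (cases xs)
    case Nil
    have "0 < fsize ys" using assms(4) by (rule fsize_pos)
    then show False using assms(5) less Nil by simp
  next
    case (Cons p r)
    have "1 < fsize xs" using assms(1) Cons by (intro fsize_gt_1) auto
    then have "s < fsize ((s, d) # xs)" using assms(3) by simp
    then have "phi_flat ((s, d) # xs) s = phi_flat ((s', d) # ys) s" using assms(6) by blast
    moreover have "phi_flat ((s, d) # xs) s = snd p"
      using Cons assms(1,3) by (simp add: phi_flat_Cons)
    moreover have "phi_flat ((s', d) # ys) s = s * d"
      using less by (simp add: phi_flat_Cons)
    ultimately show False using assms(2) Cons by simp
  qed
qed

lemma unmergeable_eqI:
  "\<forall>p\<in>set xs. 1 < fst p \<Longrightarrow> \<forall>p\<in>set ys. 1 < fst p \<Longrightarrow> unmergeable xs \<Longrightarrow> unmergeable ys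
   \<Longrightarrow> fsize xs = fsize ys \<Longrightarrow> \<forall>y < fsize xs. phi_flat xs y = phi_flat ys y \<Longrightarrow> xs = ys"
proof (induction xs arbitrary: ys)
  case Nil
  then show ?case using fsize_gt_1[of ys] by (cases ys) auto
next
  case (Cons p xs)
  obtain s d where p: "p = (s, d)" by force
  have s: "1 < s" using Cons.prems p by auto
  have "ys \<noteq> []" using Cons.prems(1,5) fsize_gt_1[of "p # xs"] by auto
  then obtain s' d' ys' where ys: "ys = (s', d') # ys'" by (metis list.exhaust prod.exhaust)
  have s': "1 < s'" using Cons.prems ys by auto
  have "0 < fsize xs" using Cons.prems(1) by (intro fsize_pos) auto
  then have "1 < fsize (p # xs)" using s p less_1_mult'[of s "fsize xs"] by simp
  then have "phi_flat (p # xs) 1 = phi_flat ys 1" using Cons.prems(6) by blast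
  then have dd: "d' = d" using s s' p ys by (simp add: phi_flat_Cons)
  have ss: "s' = s"
  proof (rule antisym)
    show "s' \<le> s"
      using Cons.prems p ys dd s by (intro unmergeable_first_shape_le[of xs s d ys' s']) auto
    show "s \<le> s'"
      using Cons.prems p ys dd s' by (intro unmergeable_first_shape_le[of ys' s' d xs s]) auto
  qed
  have "xs = ys'"
  proof (rule Cons.IH)
    show "fsize xs = fsize ys'" using Cons.prems(5) p ys ss s by simp
    show "\<forall>y < fsize xs. phi_flat xs y = phi_flat ys' y"
    proof (intro allI impI)
      fix y assume "y < fsize xs"
      then have "s * y < fsize (p # xs)" using p s by simp
      then have "phi_flat (p # xs) (s * y) = phi_flat ys (s * y)" using Cons.prems(6) by blast
      then show "phi_flat xs y = phi_flat ys' y" using p ys ss s by (simp add: phi_flat_Cons)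
    qed
  qed (use Cons.prems ys in \<open>auto elim: unmergeable.elims\<close>)
  then show ?case using p ys ss dd by simp
qed

section \<open>Nested layouts\<close>

lemma fillT_fillL_props:
  "snd (fillT X ns) = drop (length (flat X)) ns \<and>
   (length (flat X) \<le> length ns \<longrightarrow> flat (fst (fillT X ns)) = take (length (flat X)) ns) \<and>
   congruent X (fst (fillT X ns))"
  "snd (fillL xs ns) = drop (length (concat (map flat xs))) ns \<and>
   (length (concat (map flat xs)) \<le> length ns \<longrightarrow>
      concat (map flat (fst (fillL xs ns))) = take (length (concat (map flat xs))) ns) \<and>
   list_all2 congruent xs (fst (fillL xs ns))"
proof (induction X ns and xs ns rule: fillT_fillL.induct)
  case (1 n ns)
  then show ?case by (cases ns) auto
next
  case (4 x xs ns)
  obtain y r where yr: "fillT x ns = (y, r)" by force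
  obtain ys r' where ysr: "fillL xs r = (ys, r')" by force
  show ?case using 4(1) 4(2)[OF yr[symmetric] refl] yr ysr by (auto simp: take_add add.commute)
qed (auto split: prod.splits)

lemma flat_fill: "length ns = length (flat X) \<Longrightarrow> flat (fill X ns) = ns"
  using fillT_fillL_props(1)[of X ns] by (simp add: fill_def)

lemma congruent_fill: "congruent X (fill X ns)"
  using fillT_fillL_props(1)[of X ns] by (simp add: fill_def)

lemma congruent_length_flat: "congruent X D \<Longrightarrow> length (flat X) = length (flat D)"
proof (induction X D rule: congruent.induct)
  case (2 xs ys)
  then have "list_all2 (\<lambda>x y. length (flat x) = length (flat y)) xs ys"
    by (auto simp: list_all2_conv_all_nth)
  then have "length (concat (map flat xs)) = length (concat (map flat ys))"
    by (induction rule: list_all2_induct) auto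
  then show ?case by simp
qed auto

lemma refines_refl: "refines X X"
  by (induction X) (auto simp: tsize_def list_all2_conv_all_nth)

lemma map_fst_lflat: "congruent X D \<Longrightarrow> map fst (lflat (X, D)) = flat X"
  by (simp add: lflat_def congruent_length_flat)

lemma lsize_eq_fsize_lflat: "congruent (fst L) (snd L) \<Longrightarrow> lsize L = fsize (lflat L)"
  by (cases L) (simp add: lsize_def tsize_def map_fst_lflat)

lemma valid_layout_iff_lflat:
  "valid_layout L \<longleftrightarrow> congruent (fst L) (snd L) \<and> (\<forall>p\<in>set (lflat L). 0 < fst p)"
proof (cases "congruent (fst L) (snd L)")
  case True
  then have "set (flat (fst L)) = fst ` set (lflat L)"
    using map_fst_lflat[of "fst L" "snd L"] by (metis list.set_map prod.collapse)
  then show ?thesis using True by (simp add: valid_layout_def positive_nt_def)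
qed (simp add: valid_layout_def)

lemma lflat_lconcat:
  "congruent (fst L1) (snd L1) \<Longrightarrow> congruent (fst L2) (snd L2) \<Longrightarrow>
   lflat (lconcat L1 L2) = lflat L1 @ lflat L2"
  by (simp add: lconcat_def lflat_def congruent_length_flat)

lemma coalesced_over_refl:
  "congruent X D \<Longrightarrow> \<forall>x\<in>set (flat X). 1 < x \<Longrightarrow> coalesced_over X D X"
proof (induction X arbitrary: D)
  case (Leaf n)
  then show ?case by (cases D) (auto simp: coalesced_def tsize_def)
next
  case (Node xs)
  then obtain ds where "D = Node ds" by (cases D) auto
  with Node show ?case by (auto simp: list_all2_conv_all_nth)
qed

lemma lflat_layout_of_flat: "lflat (layout_of_flat sd) = (if sd = [] then [(1, 0)] else sd)"
proof -
  consider "sd = []" | p where "sd = [p]" | "1 < length sd"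
    by (cases sd rule: remdups_adj.cases) auto
  then show ?thesis
    by cases (auto simp: layout_of_flat_def lflat_def o_def zip_map_fst_snd)
qed

lemma congruent_layout_of_flat: "congruent (fst (layout_of_flat sd)) (snd (layout_of_flat sd))"
  by (auto simp: layout_of_flat_def list_all2_conv_all_nth)

lemma lsize_layout_of_flat: "lsize (layout_of_flat sd) = fsize sd"
  using lsize_eq_fsize_lflat[OF congruent_layout_of_flat] by (simp add: lflat_layout_of_flat)

lemma phi_layout_of_flat: "phi (layout_of_flat sd) = phi_flat sd"
  by (auto simp: phi_def lflat_layout_of_flat phi_flat_Cons)

lemma coal_layout_of_flat_coal_flat:
  "coal (layout_of_flat (coal_flat sd)) = layout_of_flat (coal_flat sd)"
  by (cases "coal_flat sd = []")
    (simp_all add: coal_def lflat_layout_of_flat coal_flat_idem, simp add: coal_flat_def)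

lemma coalesced_layout_of_flat:
  assumes "\<forall>p\<in>set sd. 1 < fst p" and "unmergeable sd"
  shows "coalesced (layout_of_flat sd)"
proof -
  consider "sd = []" | p where "sd = [p]" | "1 < length sd"
    by (cases sd rule: remdups_adj.cases) auto
  then show ?thesis
  proof cases
    case 3
    define L where "L = layout_of_flat sd"
    have L_eq: "L = (Node (map (Leaf \<circ> fst) sd), Node (map (Leaf \<circ> snd) sd))"
      using 3 by (simp add: L_def layout_of_flat_def)
    have "fold max (map (\<lambda>_. 0) sd) 0 = (0::nat)"
      by (induction sd) auto
    then have "depth (fst L) = 1" by (simp add: L_eq o_def)
    moreover have "rank (fst L) > 1" using 3 by (simp add: L_eq)
    moreover have "flat_coalesced (lflat L)"
      using 3 assms by (auto simp: L_def lflat_layout_of_flat flat_coalesced_iff)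
    ultimately show ?thesis by (simp add: coalesced_def L_def)
  qed (use assms in \<open>auto simp: coalesced_def layout_of_flat_def tsize_def\<close>)
qed

lemma depth_1_imp_Node_Leafs: "depth X = 1 \<Longrightarrow> \<exists>ns. X = Node (map Leaf ns)"
proof (cases X)
  case (Node xs)
  assume "depth X = 1"
  then have "Max (set (0 # map depth xs)) = 0"
    using Node by (simp only: Max.set_eq_fold) simp
  then have "\<forall>x\<in>set xs. depth x = 0"
    using Max_ge[of "insert 0 (depth ` set xs)"] by fastforce
  then have "\<forall>x\<in>set xs. x = Leaf (hd (flat x))"
    by (metis depth.elims flat.simps(1) list.sel(1) nat.simps(3))
  then have "xs = map Leaf (map (\<lambda>x. hd (flat x)) xs)" by (induction xs) auto
  then show ?thesis using Node by blast
qed simp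

lemma congruent_Node_Leafs:
  "congruent (Node (map Leaf ns)) D \<Longrightarrow> \<exists>es. D = Node (map Leaf es) \<and> length es = length ns"
proof (cases D)
  case (Node ds)
  assume "congruent (Node (map Leaf ns)) D"
  then have "list_all2 congruent (map Leaf ns) ds" using Node by simp
  then have "ds = map Leaf (map (\<lambda>x. hd (flat x)) ds)" "length ds = length ns"
    by (auto simp: list_all2_conv_all_nth intro!: nth_equalityI elim!: congruent.elims)
  then show ?thesis using Node by (metis length_map)
qed simp

lemma coalesced_obtain_flat:
  assumes "valid_layout L" and "coalesced L"
  obtains sd where "L = layout_of_flat sd" "\<forall>p\<in>set sd. 1 < fst p" "unmergeable sd"
proof -
  obtain X D where L: "L = (X, D)" by force
  have cg: "congruent X D" and pos: "\<forall>p\<in>set (lflat L). 0 < fst p"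
    using assms(1) L by (auto simp: valid_layout_iff_lflat)
  consider "L = (Leaf 1, Leaf 0)" | "depth X = 0" "tsize X > 1"
    | "depth X = 1" "rank X > 1" "flat_coalesced (lflat L)"
    using assms(2) L by (auto simp: coalesced_def)
  then show ?thesis
  proof cases
    case 1
    then show ?thesis using that[of "[]"] by (simp add: layout_of_flat_def)
  next
    case 2
    then obtain s d where "X = Leaf s" "D = Leaf d" using cg by (auto elim!: depth.elims congruent.elims)
    then show ?thesis using that[of "[(s, d)]"] L 2 by (simp add: layout_of_flat_def tsize_def)
  next
    case 3
    obtain ns where X: "X = Node (map Leaf ns)" using depth_1_imp_Node_Leafs[OF 3(1)] by blast
    obtain es where D: "D = Node (map Leaf es)" and es: "length es = length ns"
      using congruent_Node_Leafs cg X by blast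
    have "lflat L = zip ns es" using L X D by (simp add: lflat_def o_def)
    moreover have "1 < length ns" using 3(2) X by simp
    ultimately have "L = layout_of_flat (lflat L)"
      using L X D es by (simp add: layout_of_flat_def flip: map_map)
    moreover have "\<forall>p\<in>set (lflat L). 1 < fst p"
      using flat_coalesced_shapes_gt_1 3(3) pos by blast
    moreover have "unmergeable (lflat L)" using 3(3) by (simp add: flat_coalesced_iff)
    ultimately show ?thesis using that by blast
  qed
qed

lemma coalesced_eqI:
  assumes "valid_layout L1" "coalesced L1" "valid_layout L2" "coalesced L2"
    and "lsize L1 = lsize L2" and "\<forall>y < lsize L1. phi L1 y = phi L2 y"
  shows "L1 = L2"
proof -
  obtain sd1 where 1: "L1 = layout_of_flat sd1" "\<forall>p\<in>set sd1. 1 < fst p" "unmergeable sd1"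
    using coalesced_obtain_flat[OF assms(1,2)] .
  obtain sd2 where 2: "L2 = layout_of_flat sd2" "\<forall>p\<in>set sd2. 1 < fst p" "unmergeable sd2"
    using coalesced_obtain_flat[OF assms(3,4)] .
  have "sd1 = sd2"
    using 1 2 assms(5,6) by (intro unmergeable_eqI) (auto simp: lsize_layout_of_flat phi_layout_of_flat)
  then show ?thesis using 1 2 by simp
qed

function relative_modes :: "ntuple \<Rightarrow> ntuple \<Rightarrow> ntuple \<Rightarrow> layout list" where
  "relative_modes X' D (Leaf n) = [(X', D)]"
| "relative_modes (Node xs') (Node ds) (Node xs) =
     concat (map (\<lambda>i. relative_modes (xs' ! i) (ds ! i) (xs ! i)) [0..<length xs])"
| "relative_modes (Leaf a) D (Node xs) = []"
| "relative_modes (Node xs') (Leaf d) (Node xs) = []"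
  by pat_completeness auto
termination
  by (relation "measure (\<lambda>(_, _, x). size x)") (auto simp: coal_over_term_aux)

lemma refines_congruent_Node:
  assumes "refines (Node xs') (Node xs)" and "congruent (Node xs') (Node ds)"
  shows "length xs' = length xs" "length ds = length xs"
    and "\<And>i. i < length xs \<Longrightarrow> refines (xs' ! i) (xs ! i) \<and> congruent (xs' ! i) (ds ! i)"
  using assms by (auto simp: list_all2_conv_all_nth)

lemma map_lsize_relative_modes:
  "refines X' X \<Longrightarrow> congruent X' D \<Longrightarrow> map lsize (relative_modes X' D X) = flat X"
proof (induction X' D X rule: relative_modes.induct)
  case (2 xs' ds xs)
  note N = refines_congruent_Node[OF 2(2,3)]
  have "map (\<lambda>i. map lsize (relative_modes (xs' ! i) (ds ! i) (xs ! i))) [0..<length xs]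
      = map (\<lambda>i. flat (xs ! i)) [0..<length xs]"
    using 2(1) N(3) by (intro map_cong) auto
  also have "\<dots> = map flat xs" by (intro nth_equalityI) auto
  finally show ?case by (simp add: map_concat o_def)
qed (auto simp: lsize_def elim: refines.elims)

lemma length_relative_modes:
  "refines X' X \<Longrightarrow> congruent X' D \<Longrightarrow> length (relative_modes X' D X) = length (flat X)"
  by (metis length_map map_lsize_relative_modes)

lemma concat_lflat_relative_modes:
  "refines X' X \<Longrightarrow> congruent X' D \<Longrightarrow> concat (map lflat (relative_modes X' D X)) = lflat (X', D)"
proof (induction X' D X rule: relative_modes.induct)
  case (2 xs' ds xs)
  note N = refines_congruent_Node[OF 2(2,3)]
  have "map (\<lambda>i. concat (map lflat (relative_modes (xs' ! i) (ds ! i) (xs ! i)))) [0..<length xs]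
      = map (\<lambda>i. lflat (xs' ! i, ds ! i)) [0..<length xs]"
    using 2(1) N(3) by (intro map_cong) auto
  also have "\<dots> = map (\<lambda>(a, b). zip a b) (zip (map flat xs') (map flat ds))"
    using N by (intro nth_equalityI) (auto simp: lflat_def)
  finally have "map (\<lambda>i. concat (map lflat (relative_modes (xs' ! i) (ds ! i) (xs ! i)))) [0..<length xs]
      = map (\<lambda>(a, b). zip a b) (zip (map flat xs') (map flat ds))" .
  moreover have "list_all2 (\<lambda>a b. length a = length b) (map flat xs') (map flat ds)"
    using N by (auto simp: list_all2_conv_all_nth congruent_length_flat)
  ultimately show ?case
    by (simp add: map_concat concat_concat o_def zip_concat lflat_def[of "(Node xs', Node ds)"])
qed auto

lemma congruent_relative_modes:
  "refines X' X \<Longrightarrow> congruent X' D \<Longrightarrow> b \<in> set (relative_modes X' D X) \<Longrightarrow>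
   congruent (fst b) (snd b)"
proof (induction X' D X rule: relative_modes.induct)
  case (2 xs' ds xs)
  then show ?case using refines_congruent_Node[OF 2(2,3)] by auto
qed auto

lemma coalesced_over_iff_relative_modes:
  "refines X' X \<Longrightarrow> congruent X' D \<Longrightarrow>
   coalesced_over X' D X \<longleftrightarrow> (\<forall>b\<in>set (relative_modes X' D X). coalesced b)"
proof (induction X' D X rule: relative_modes.induct)
  case (2 xs' ds xs)
  then show ?case using refines_congruent_Node[OF 2(2,3)] by auto
qed auto

lemma relative_modes_inj:
  "refines X1 X \<Longrightarrow> refines X2 X \<Longrightarrow> congruent X1 D1 \<Longrightarrow> congruent X2 D2 \<Longrightarrow>
   relative_modes X1 D1 X = relative_modes X2 D2 X \<Longrightarrow> X1 = X2 \<and> D1 = D2"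
proof (induction X arbitrary: X1 D1 X2 D2)
  case (Node xs)
  obtain xs1 ds1 where 1: "X1 = Node xs1" "D1 = Node ds1"
    using Node.prems(1,3) by (auto elim!: refines.elims congruent.elims)
  obtain xs2 ds2 where 2: "X2 = Node xs2" "D2 = Node ds2"
    using Node.prems(2,4) by (auto elim!: refines.elims congruent.elims)
  note N1 = refines_congruent_Node[OF Node.prems(1,3)[unfolded 1]]
  note N2 = refines_congruent_Node[OF Node.prems(2,4)[unfolded 2]]
  have "map (\<lambda>i. relative_modes (xs1 ! i) (ds1 ! i) (xs ! i)) [0..<length xs] =
        map (\<lambda>i. relative_modes (xs2 ! i) (ds2 ! i) (xs ! i)) [0..<length xs]"
    using Node.prems(5) 1 2 N1(3) N2(3) length_relative_modes
    by (subst concat_eq_concat_iff[symmetric]) (auto simp: set_zip)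
  then have eq: "relative_modes (xs1 ! i) (ds1 ! i) (xs ! i) = relative_modes (xs2 ! i) (ds2 ! i) (xs ! i)"
    if "i < length xs" for i
    using that map_eq_conv by fastforce
  have "xs1 ! i = xs2 ! i \<and> ds1 ! i = ds2 ! i" if "i < length xs" for i
    using Node.IH[OF nth_mem[OF that]] N1(3)[OF that] N2(3)[OF that] eq[OF that] by blast
  then show ?case using 1 2 N1 N2 by (auto intro: nth_equalityI)
qed simp

lemma relative_mode_valid:
  assumes "valid_layout C" "refines (fst C) X" "i < length (flat X)"
  defines "R \<equiv> relative_modes (fst C) (snd C) X ! i"
  shows "valid_layout R" "lsize R = flat X ! i"
proof -
  note cg = valid_layout_def[THEN iffD1, OF assms(1), THEN conjunct1]
  have i: "i < length (relative_modes (fst C) (snd C) X)"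
    using length_relative_modes[OF assms(2) cg] assms(3) by simp
  have "set (lflat R) \<subseteq> set (concat (map lflat (relative_modes (fst C) (snd C) X)))"
    using nth_mem[OF i] by (auto simp: R_def)
  then have "set (lflat R) \<subseteq> set (lflat C)"
    using concat_lflat_relative_modes[OF assms(2) cg] by simp
  then show "valid_layout R"
    using assms(1) congruent_relative_modes[OF assms(2) cg nth_mem[OF i]]
    by (auto simp: valid_layout_iff_lflat R_def)
  show "lsize R = flat X ! i"
    using map_lsize_relative_modes[OF assms(2) cg] i by (metis R_def nth_map)
qed

lemma fsize_concat: "fsize (concat xss) = prod_list (map fsize xss)"
  by (induction xss) auto

lemma phi_flat_concat_nth:
  assumes "\<forall>b\<in>set bs. \<forall>p\<in>set b. 0 < fst p" "i < length bs" "y < fsize (bs ! i)"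
  shows "phi_flat (concat bs) (y * prod_list (map fsize (take i bs))) = phi_flat (bs ! i) y"
proof -
  let ?P = "prod_list (map fsize (take i bs))"
  have split: "concat bs = concat (take i bs) @ (bs ! i @ concat (drop (Suc i) bs))"
    using assms(2) by (metis concat.simps(2) concat_append id_take_nth_drop)
  have fsize_take: "fsize (concat (take i bs)) = ?P" by (rule fsize_concat)
  have pos: "\<forall>p\<in>set (concat (take i bs)). 0 < fst p" using assms(1) by (auto dest: in_set_takeD)
  then have "phi_flat (concat (take i bs)) (y * ?P) = 0"
    using phi_flat_mod[OF pos, of "y * ?P"] fsize_take by simp
  moreover have "0 < ?P" using fsize_pos[OF pos] fsize_take by simp
  ultimately show ?thesis using split fsize_take assms(3) by (simp add: phi_flat_append)
qed

lemma phi_relative_mode: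
  assumes "valid_layout C" "refines (fst C) X" "i < length (flat X)" "y < flat X ! i"
  shows "phi (relative_modes (fst C) (snd C) X ! i) y = phi C (y * prod_list (take i (flat X)))"
proof -
  note cg = valid_layout_def[THEN iffD1, OF assms(1), THEN conjunct1]
  define bs where "bs = map lflat (relative_modes (fst C) (snd C) X)"
  have concat: "concat bs = lflat C"
    using concat_lflat_relative_modes[OF assms(2) cg] by (simp add: bs_def)
  have "map fsize bs = map lsize (relative_modes (fst C) (snd C) X)"
    unfolding bs_def map_map using congruent_relative_modes[OF assms(2) cg]
    by (intro map_cong) (simp_all add: lsize_eq_fsize_lflat)
  then have sizes: "map fsize bs = flat X" using map_lsize_relative_modes[OF assms(2) cg] by simp
  have i: "i < length bs" using assms(3) sizes by (metis length_map)
  have "\<forall>b\<in>set bs. \<forall>p\<in>set b. 0 < fst p"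
    using assms(1) unfolding valid_layout_iff_lflat concat[symmetric] by simp
  moreover have "y < fsize (bs ! i)" using assms(4) sizes i by (metis nth_map)
  moreover have "prod_list (map fsize (take i bs)) = prod_list (take i (flat X))"
    by (simp add: sizes flip: take_map)
  ultimately show ?thesis
    using phi_flat_concat_nth[OF _ i] concat i by (simp add: phi_def bs_def)
qed

lemma positive_flat_if_refined:
  assumes "valid_layout C" "refines (fst C) X"
  shows "\<forall>x\<in>set (flat X). 0 < x"
proof
  fix x assume "x \<in> set (flat X)"
  then obtain i where i: "i < length (flat X)" "x = flat X ! i" by (auto simp: in_set_conv_nth)
  define R where "R = relative_modes (fst C) (snd C) X ! i"
  have R: "valid_layout R" "lsize R = x"
    using relative_mode_valid[OF assms i(1)] i(2) by (simp_all add: R_def)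
  then have "0 < fsize (lflat R)" by (intro fsize_pos) (simp add: valid_layout_iff_lflat)
  then show "0 < x" using R by (simp add: lsize_eq_fsize_lflat valid_layout_def)
qed

lemma coalesced_over_eqI:
  assumes "valid_layout C1" "valid_layout C2" "refines (fst C1) X" "refines (fst C2) X"
    and "coalesced_over (fst C1) (snd C1) X" "coalesced_over (fst C2) (snd C2) X"
    and "\<forall>x < tsize X. phi C1 x = phi C2 x"
  shows "C1 = C2"
proof -
  note cg1 = valid_layout_def[THEN iffD1, OF assms(1), THEN conjunct1]
  note cg2 = valid_layout_def[THEN iffD1, OF assms(2), THEN conjunct1]
  have "relative_modes (fst C1) (snd C1) X = relative_modes (fst C2) (snd C2) X"
  proof (rule nth_equalityI)
    show "length (relative_modes (fst C1) (snd C1) X) = length (relative_modes (fst C2) (snd C2) X)"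
      using length_relative_modes assms(3,4) cg1 cg2 by simp
    fix i assume "i < length (relative_modes (fst C1) (snd C1) X)"
    then have i: "i < length (flat X)" using length_relative_modes assms(3) cg1 by simp
    note R1 = relative_mode_valid[OF assms(1,3) i] and R2 = relative_mode_valid[OF assms(2,4) i]
    show "relative_modes (fst C1) (snd C1) X ! i = relative_modes (fst C2) (snd C2) X ! i"
    proof (rule coalesced_eqI)
      show "coalesced (relative_modes (fst C1) (snd C1) X ! i)"
        "coalesced (relative_modes (fst C2) (snd C2) X ! i)"
        using assms(3-6) cg1 cg2 i length_relative_modes
        by (simp_all add: coalesced_over_iff_relative_modes)
      show "\<forall>y < lsize (relative_modes (fst C1) (snd C1) X ! i).
          phi (relative_modes (fst C1) (snd C1) X ! i) y = phi (relative_modes (fst C2) (snd C2) X ! i) y"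
        using R1 R2 assms(7) phi_relative_mode[OF assms(1,3) i] phi_relative_mode[OF assms(2,4) i]
          prod_take_nth_less[OF positive_flat_if_refined[OF assms(1,3)] i]
        by (simp add: tsize_def)
    qed (use R1 R2 in simp_all)
  qed
  then show ?thesis using relative_modes_inj[OF assms(3,4) cg1 cg2] by (simp add: prod_eq_iff)
qed

lemma lcompose_eqI:
  assumes "valid_layout C" "refines (fst C) (fst A)" "coalesced_over (fst C) (snd C) (fst A)"
    and "\<forall>x < lsize A. phi A x < lsize B" "\<forall>x < lsize A. phi C x = phi B (phi A x)"
  shows "lcompose B A = C"
  unfolding lcompose_def
proof (rule the_equality)
  fix C' assume "valid_layout C' \<and> refines (fst C') (fst A) \<and> coalesced_over (fst C') (snd C') (fst A)
    \<and> (\<forall>x<lsize A. phi A x < lsize B) \<and> (\<forall>x<lsize A. phi C' x = phi B (phi A x))"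
  then show "C' = C" using assms by (intro coalesced_over_eqI[of C' C "fst A"]) (auto simp: lsize_def)
qed (use assms in blast)

text \<open>\<open>graft\<close> is to lists of layouts what \<open>layout_of_flat\<close> is to lists of modes.\<close>

definition graft :: "layout list \<Rightarrow> layout" where
  "graft Ls = (if length Ls > 1 then (Node (map fst Ls), Node (map snd Ls))
     else if length Ls = 1 then hd Ls else (Leaf 1, Leaf 0))"

lemma lflat_graft:
  assumes "\<forall>L\<in>set Ls. congruent (fst L) (snd L)"
  shows "lflat (graft Ls) = (if Ls = [] then [(1, 0)] else concat (map lflat Ls))"
proof -
  consider "Ls = []" | L where "Ls = [L]" | "1 < length Ls"
    by (cases Ls rule: remdups_adj.cases) auto
  then show ?thesis
  proof cases
    case 3
    have "list_all2 (\<lambda>a b. length a = length b) (map (flat \<circ> fst) Ls) (map (flat \<circ> snd) Ls)"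
      using assms congruent_length_flat by (auto simp: list_all2_conv_all_nth)
    then have "zip (concat (map (flat \<circ> fst) Ls)) (concat (map (flat \<circ> snd) Ls)) = concat (map lflat Ls)"
      by (simp add: zip_concat zip_map_map lflat_def[abs_def] case_prod_unfold o_def zip_same_conv_map)
    then show ?thesis using 3 by (auto simp: graft_def lflat_def o_def)
  qed (auto simp: graft_def lflat_def)
qed

lemma graft_props:
  assumes "list_all2 (\<lambda>L q. lsize L = fst q \<and> coalesced L \<and> congruent (fst L) (snd L)) Ls sd"
  shows "refines (fst (graft Ls)) (fst (layout_of_flat sd))"
    and "coalesced_over (fst (graft Ls)) (snd (graft Ls)) (fst (layout_of_flat sd))"
    and "congruent (fst (graft Ls)) (snd (graft Ls))"
proof -
  have len: "length Ls = length sd" using assms by (rule list_all2_lengthD)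
  have nth: "lsize (Ls ! i) = fst (sd ! i) \<and> coalesced (Ls ! i) \<and> congruent (fst (Ls ! i)) (snd (Ls ! i))"
    if "i < length Ls" for i
    using assms that by (auto simp: list_all2_conv_all_nth)
  consider "Ls = []" | L where "Ls = [L]" | "1 < length Ls"
    by (cases Ls rule: remdups_adj.cases) auto
  then have "refines (fst (graft Ls)) (fst (layout_of_flat sd))
    \<and> coalesced_over (fst (graft Ls)) (snd (graft Ls)) (fst (layout_of_flat sd))
    \<and> congruent (fst (graft Ls)) (snd (graft Ls))"
  proof cases
    case 1
    then show ?thesis using len by (simp add: graft_def layout_of_flat_def coalesced_def tsize_def)
  next
    case (2 L)
    then show ?thesis
      using len nth[of 0] by (cases sd) (auto simp: graft_def layout_of_flat_def lsize_def)
  next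
    case 3
    then show ?thesis
      using len nth by (auto simp: graft_def layout_of_flat_def list_all2_conv_all_nth lsize_def)
  qed
  then show "refines (fst (graft Ls)) (fst (layout_of_flat sd))"
    and "coalesced_over (fst (graft Ls)) (snd (graft Ls)) (fst (layout_of_flat sd))"
    and "congruent (fst (graft Ls)) (snd (graft Ls))"
    by blast+
qed

lemma phi_flat_append_lflat_graft:
  "\<forall>L\<in>set Ls. congruent (fst L) (snd L) \<Longrightarrow>
   phi_flat (xs @ lflat (graft Ls)) = phi_flat (xs @ concat (map lflat Ls))"
  by (auto simp: lflat_graft phi_flat_append phi_flat_Cons fun_eq_iff)

lemma coal_flat_append_lflat_graft:
  "\<forall>L\<in>set Ls. congruent (fst L) (snd L) \<Longrightarrow>
   coal_flat (xs @ lflat (graft Ls)) = coal_flat (xs @ concat (map lflat Ls))"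
  by (auto simp: lflat_graft coal_flat_def)

section \<open>Mixed-radix digits\<close>

lemma mixed_radix_digits:
  assumes "\<forall>x\<in>set ts. 0 < (x::nat)" "\<forall>j<length ts. Z j < ts ! j"
  shows "(\<Sum>j<length ts. Z j * prod_list (take j ts)) < prod_list ts \<and>
         (\<forall>k<length ts. (\<Sum>j<length ts. Z j * prod_list (take j ts)) div prod_list (take k ts) mod ts ! k = Z k)"
  using assms
proof (induction ts arbitrary: Z)
  case (Cons t ts)
  let ?N = "\<Sum>j<length ts. Z (Suc j) * prod_list (take j ts)"
  have IH: "?N < prod_list ts \<and> (\<forall>k<length ts. ?N div prod_list (take k ts) mod ts ! k = Z (Suc k))"
    using Cons.IH[of "\<lambda>j. Z (Suc j)"] Cons.prems(1) Cons.prems(2)[rule_format, of "Suc _"] by simp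
  have t: "0 < t" "Z 0 < t" using Cons.prems by auto
  have sum: "(\<Sum>j<length (t # ts). Z j * prod_list (take j (t # ts))) = Z 0 + t * ?N"
    unfolding length_Cons sum.lessThan_Suc_shift by (simp add: sum_distrib_left algebra_simps)
  have "Z 0 + t * ?N < t * (?N + 1)" using t by simp
  also have "\<dots> \<le> t * prod_list ts" using IH by (intro mult_le_mono2) simp
  finally have less: "Z 0 + t * ?N < t * prod_list ts" .
  have "(Z 0 + t * ?N) div prod_list (take k (t # ts)) mod (t # ts) ! k = Z k"
    if "k < length (t # ts)" for k
    using IH t that by (cases k) (simp_all add: div_mult2_eq)
  then show ?case using sum less by simp
qed simp

lemma phi_flat_eq_sum: "phi_flat xs x = (\<Sum>i<length xs. (x div fsize (take i xs) mod fst (xs!i)) * snd (xs!i))"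
  by (simp add: phi_flat_def take_map)

lemma phi_flat_upt:
  "phi_flat (map (\<lambda>j. (ts ! j, w j)) [0..<length ts]) y =
   (\<Sum>j<length ts. (y div prod_list (take j ts) mod ts ! j) * w j)"
proof -
  have "map fst (map (\<lambda>j. (ts ! j, w j)) [0..<length ts]) = ts" by (simp add: o_def map_nth)
  then show ?thesis by (simp add: phi_flat_eq_sum flip: take_map)
qed

lemma sum_nth_distinct_upto:
  assumes "distinct \<pi>" "set \<pi> = {..<length \<pi>}"
  shows "(\<Sum>k<length \<pi>. F (\<pi>!k)) = (\<Sum>j<length \<pi>. (F j :: nat))"
proof -
  have "(\<Sum>k<length \<pi>. F (\<pi>!k)) = sum_list (map F \<pi>)"
    by (simp add: sum_list_sum_nth atLeast0LessThan)
  also have "\<dots> = sum F (set \<pi>)" using assms(1) by (simp add: sum.distinct_set_conv_list)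
  finally show ?thesis using assms(2) by simp
qed

text \<open>Both sides are determined by the digits of \<open>x\<close> in the mixed radix \<open>ts\<close>, read in the order \<open>\<pi>\<close>.\<close>

lemma phi_flat_permuted:
  fixes \<pi> :: "nat list"
  assumes pos: "\<forall>x\<in>set ts. 0 < (x::nat)" and d: "distinct \<pi>" and s: "set \<pi> = {..<length ts}"
  shows "phi_flat (map (\<lambda>j. (ts!j, prod_list (take j ts))) \<pi>) x < prod_list ts \<and>
    phi_flat (map (\<lambda>j. (ts!j, w j)) \<pi>) x =
    phi_flat (map (\<lambda>j. (ts!j, w j)) [0..<length ts]) (phi_flat (map (\<lambda>j. (ts!j, prod_list (take j ts))) \<pi>) x)"
proof -
  have lp: "length \<pi> = length ts" using d s by (metis card_lessThan distinct_card)
  define sp where "sp = map (nth ts) \<pi>"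
  define dig where "dig k = x div prod_list (take k sp) mod sp ! k" for k
  define Z :: "nat \<Rightarrow> nat" where "Z j = dig (THE k. k < length \<pi> \<and> \<pi>!k = j)" for j
  have Zp: "\<And>k. k < length \<pi> \<Longrightarrow> Z (\<pi>!k) = dig k"
  proof -
    fix k assume k: "k < length \<pi>"
    have "(THE k'. k' < length \<pi> \<and> \<pi>!k' = \<pi>!k) = k"
      using d k by (intro the_equality) (auto simp: nth_eq_iff_index_eq)
    then show "Z (\<pi>!k) = dig k" by (simp add: Z_def)
  qed
  have gen: "phi_flat (map (\<lambda>j. (ts!j, v j)) \<pi>) x = (\<Sum>j<length ts. Z j * v j)" for v
  proof -
    have "phi_flat (map (\<lambda>j. (ts!j, v j)) \<pi>) x = (\<Sum>k<length \<pi>. dig k * v (\<pi>!k))"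
      unfolding phi_flat_eq_sum dig_def sp_def by (simp add: take_map[symmetric] o_def)
    also have "\<dots> = (\<Sum>k<length \<pi>. Z (\<pi>!k) * v (\<pi>!k))" using Zp by simp
    also have "\<dots> = (\<Sum>j<length \<pi>. Z j * v j)"
      using sum_nth_distinct_upto[OF d, of "\<lambda>j. Z j * v j"] s lp by simp
    finally show ?thesis using lp by simp
  qed
  have Zlt: "\<forall>j<length ts. Z j < ts ! j"
  proof (intro allI impI)
    fix j assume j: "j < length ts"
    then have "j \<in> set \<pi>" using s by simp
    then obtain k where k: "k < length \<pi>" "\<pi>!k = j" by (metis in_set_conv_nth)
    have "0 < sp ! k" using pos k lp j unfolding sp_def by simp
    then have "dig k < sp ! k" by (simp add: dig_def)
    then show "Z j < ts ! j" using Zp k sp_def by auto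
  qed
  note D = mixed_radix_digits[OF pos Zlt]
  have "phi_flat (map (\<lambda>j. (ts!j, w j)) [0..<length ts]) (\<Sum>j<length ts. Z j * prod_list (take j ts))
        = (\<Sum>j<length ts. Z j * w j)"
    unfolding phi_flat_upt using D by simp
  then show ?thesis using gen[of "\<lambda>j. prod_list (take j ts)"] gen[of w] D by simp
qed

section \<open>The complement of a complementable morphism layout\<close>

text \<open>Flat data of \<open>f \<oslash> g\<close>: \<open>ss\<close> and \<open>ts\<close> are the flattened shapes of \<open>S\<close> and \<open>T\<close>, \<open>a\<close> is the
  0-based index map of \<open>g\<close> (total, as \<open>g\<close> is complementable) and \<open>w j\<close> is the \<open>j\<close>-th stride of \<open>L\<^sub>f\<close>.\<close>

locale flat_division =
  fixes ss ts :: "nat list" and a w :: "nat \<Rightarrow> nat"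
  assumes ts_pos: "\<forall>x\<in>set ts. 0 < x"
    and a_inj: "inj_on a {..<length ss}"
    and a_range: "\<forall>i<length ss. a i < length ts"
    and a_shape: "\<forall>i<length ss. ss ! i = ts ! a i"
    and ss_neq_1: "\<forall>i<length ss. ss ! i \<noteq> 1"
begin

abbreviation n :: nat where "n \<equiv> length ss"
abbreviation m :: nat where "m \<equiv> length ts"

definition stride :: "nat \<Rightarrow> nat" where
  "stride j = prod_list (take j ts)"

definition img :: "nat list" where
  "img = filter (\<lambda>j. j \<in> a ` {..<n}) [0..<m]"

definition missing :: "nat list" where
  "missing = filter (\<lambda>j. j \<notin> a ` {..<n}) [0..<m]"

text \<open>The intervals \<open>[b, e)\<close> between consecutive image indices, including the (possibly empty) ones
  before the first and after the last.\<close>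

definition gaps :: "(nat \<times> nat) list" where
  "gaps = zip (0 # map Suc img) (img @ [m])"

definition seg :: "nat \<Rightarrow> nat \<Rightarrow> nat list" where
  "seg b e = map (nth ts) [b..<e]"

definition nontrivial :: "nat \<times> nat \<Rightarrow> bool" where
  "nontrivial g \<longleftrightarrow> prod_list (seg (fst g) (snd g)) \<noteq> 1"

definition ntgaps :: "(nat \<times> nat) list" where
  "ntgaps = filter nontrivial gaps"

definition comp_modes :: "(nat \<times> nat) list" where
  "comp_modes = map (\<lambda>(b, e). (prod_list (seg b e), stride b)) ntgaps"

definition image_modes :: "(nat \<Rightarrow> nat) \<Rightarrow> (nat \<times> nat) list" where
  "image_modes v = map (\<lambda>i. (ss ! i, v (a i))) [0..<n]"

definition block :: "(nat \<Rightarrow> nat) \<Rightarrow> nat \<Rightarrow> nat \<Rightarrow> (nat \<times> nat) list" where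
  "block v b e = map (\<lambda>j. (ts ! j, v j)) [b..<e]"

definition gap_layouts :: "layout list" where
  "gap_layouts = map (\<lambda>(b, e). layout_of_flat (coal_flat (block w b e))) ntgaps"

definition perm :: "nat list" where
  "perm = map a [0..<n] @ concat (map (\<lambda>(b, e). [b..<e]) ntgaps)"

definition trivial :: "nat list" where
  "trivial = concat (map (\<lambda>(b, e). [b..<e]) (filter (\<lambda>g. \<not> nontrivial g) gaps))"

lemma set_img: "set img = a ` {..<n}"
  using a_range by (auto simp: img_def)

lemma sorted_img: "sorted_wrt (<) img"
  unfolding img_def by (rule sorted_wrt_filter) simp

lemma img_less: "j \<in> set img \<Longrightarrow> j < m"
  by (simp add: img_def)

lemma mset_map_a: "mset (map a [0..<n]) = mset img"
proof -
  have "distinct (map a [0..<n])" using a_inj by (simp add: distinct_map atLeast0LessThan)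
  moreover have "distinct img" by (simp add: img_def)
  moreover have "set (map a [0..<n]) = set img" using set_img by (auto simp: atLeast0LessThan)
  ultimately show ?thesis using set_eq_iff_mset_eq_distinct by blast
qed

lemma concat_gaps_eq_missing: "concat (map (\<lambda>(b, e). [b..<e]) gaps) = missing"
proof -
  have "missing = filter (\<lambda>j. j \<notin> set img) [0..<m]" by (simp add: missing_def set_img)
  then show ?thesis unfolding gaps_def using sorted_img img_less by (auto intro: concat_upt_gaps)
qed

lemma img_shape_gt_1: "j \<in> set img \<Longrightarrow> 1 < ts ! j"
proof -
  assume "j \<in> set img"
  then obtain i where "i < n" "j = a i" using set_img by auto
  then have "ts ! j = ss ! i" "ss ! i \<noteq> 1" "0 < ts ! j" using a_shape ss_neq_1 a_range ts_pos by auto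
  then show ?thesis by simp
qed

lemma ss_gt_1: "\<forall>x\<in>set ss. 1 < x"
  using a_shape a_range ss_neq_1 ts_pos by (metis in_set_conv_nth less_one nat_neq_iff nth_mem)

lemma prod_seg_pos: "e \<le> m \<Longrightarrow> 0 < prod_list (seg b e)"
  using ts_pos by (intro prod_list_pos) (auto simp: seg_def)

lemma stride_split: "b \<le> e \<Longrightarrow> e \<le> m \<Longrightarrow> stride e = stride b * prod_list (seg b e)"
proof -
  assume be: "b \<le> e" "e \<le> m"
  have "[0..<e] = [0..<b] @ [b..<e]" using upt_add_eq_append[of 0 b "e - b"] be by simp
  then have "map (nth ts) [0..<e] = map (nth ts) [0..<b] @ seg b e" by (simp add: seg_def)
  moreover have "map (nth ts) [0..<k] = take k ts" if "k \<le> m" for k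
    using that by (intro nth_equalityI) auto
  ultimately have "take e ts = take b ts @ seg b e" using be by simp
  then show ?thesis by (simp add: stride_def)
qed

lemma stride_pos: "0 < stride j"
  unfolding stride_def using ts_pos by (intro prod_list_pos) (auto dest: in_set_takeD)

lemma stride_Suc: "j < m \<Longrightarrow> stride (Suc j) = stride j * ts ! j"
  by (simp add: stride_def take_Suc_conv_app_nth)

lemma stride_0: "stride 0 = 1"
  by (simp add: stride_def)

lemma stride_m: "stride m = prod_list ts"
  by (simp add: stride_def)

lemma stride_less_if_img: "j \<in> set img \<Longrightarrow> Suc j \<le> k \<Longrightarrow> k \<le> m \<Longrightarrow> stride j < stride k"
proof -
  assume j: "j \<in> set img" and k: "Suc j \<le> k" "k \<le> m"
  have "stride j < stride j * ts ! j" using stride_pos img_shape_gt_1[OF j] by simp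
  also have "\<dots> = stride (Suc j)" using stride_Suc img_less[OF j] by simp
  also have "\<dots> \<le> stride k" using stride_split[OF k] prod_seg_pos[OF k(2)] by (simp add: Suc_le_eq)
  finally show ?thesis .
qed

lemma length_gaps: "length gaps = Suc (length img)"
  by (simp add: gaps_def)

lemma nth_gaps: "r < Suc (length img) \<Longrightarrow> gaps ! r = ((0 # map Suc img) ! r, (img @ [m]) ! r)"
  by (simp add: gaps_def)

lemma gap_bounds: "g \<in> set gaps \<Longrightarrow> fst g \<le> snd g \<and> snd g \<le> m"
proof -
  assume "g \<in> set gaps"
  then obtain r where r: "r < Suc (length img)" "g = gaps ! r"
    by (metis in_set_conv_nth length_gaps)
  have s: "\<And>i j. i < j \<Longrightarrow> j < length img \<Longrightarrow> img ! i < img ! j"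
    using sorted_img by (simp add: sorted_wrt_iff_nth_less)
  have rng: "i < length img \<Longrightarrow> img ! i < m" for i using img_less by simp
  show ?thesis
  proof (cases r)
    case 0
    then show ?thesis using r rng[of 0] by (auto simp: nth_gaps nth_append)
  next
    case (Suc r')
    then show ?thesis using r s[of r' r] rng[of r'] rng[of r] by (auto simp: nth_gaps nth_append Suc_le_eq)
  qed
qed

lemma sorted_gaps: "sorted_wrt (\<lambda>g g'. snd g \<in> set img \<and> Suc (snd g) \<le> fst g') gaps"
  unfolding sorted_wrt_iff_nth_less length_gaps
proof (intro allI impI)
  fix r r' assume rr: "r < r'" "r' < Suc (length img)"
  have "\<And>i j. i \<le> j \<Longrightarrow> j < length img \<Longrightarrow> img ! i \<le> img ! j"
    using sorted_img by (metis le_eq_less_or_eq order.strict_implies_order sorted_wrt_iff_nth_less)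
  then show "snd (gaps ! r) \<in> set img \<and> Suc (snd (gaps ! r)) \<le> fst (gaps ! r')"
    using rr by (cases r') (auto simp: nth_gaps nth_append)
qed

lemma lsort_image_modes_stride: "lsort (image_modes stride) = map (\<lambda>j. (ts ! j, stride j)) img"
  unfolding lsort_def
proof (rule sort_key_inj_key_eq)
  have "image_modes stride = map (\<lambda>j. (ts ! j, stride j)) (map a [0..<n])"
    using a_shape by (simp add: image_modes_def)
  then show "mset (image_modes stride) = mset (map (\<lambda>j. (ts ! j, stride j)) img)"
    by (metis mset_map mset_map_a)
  show "inj_on (\<lambda>(s, d). (d, s)) (set (image_modes stride))"
    by (auto simp: inj_on_def)
  have "sorted_wrt (\<lambda>x y. (stride x, ts ! x) \<le> (stride y, ts ! y)) img"
    by (rule sorted_wrt_mono_rel[OF _ sorted_img])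
      (auto simp: less_imp_le intro!: stride_less_if_img dest: img_less)
  then show "sorted (map (\<lambda>(s, d). (d, s)) (map (\<lambda>j. (ts ! j, stride j)) img))"
    by (simp add: sorted_wrt_map o_def)
qed

text \<open>The list built in the definition of \<open>lcomplement\<close>, before coalescing.\<close>

lemma complement_candidate_eq:
  "zip (map2 (div) (map snd (map (\<lambda>j. (ts ! j, stride j)) img) @ [prod_list ts])
          (1 # map (\<lambda>(s, d). s * d) (map (\<lambda>j. (ts ! j, stride j)) img)))
       (1 # map (\<lambda>(s, d). s * d) (map (\<lambda>j. (ts ! j, stride j)) img))
   = map (\<lambda>(b, e). (prod_list (seg b e), stride b)) gaps"
proof -
  define B where "B = 0 # map Suc img"
  define E where "E = img @ [m]"
  have starts: "1 # map (\<lambda>(s, d). s * d) (map (\<lambda>j. (ts ! j, stride j)) img) = map stride B"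
    using img_less by (auto simp: B_def stride_0 stride_Suc mult.commute)
  have ends: "map snd (map (\<lambda>j. (ts ! j, stride j)) img) @ [prod_list ts] = map stride E"
    by (simp add: E_def stride_m)
  have "zip (map2 (div) (map stride E) (map stride B)) (map stride B)
      = map (\<lambda>(b, e). (prod_list (seg b e), stride b)) (zip B E)"
  proof (rule nth_equalityI)
    fix r assume "r < length (zip (map2 (div) (map stride E) (map stride B)) (map stride B))"
    then have r: "r < length B" "r < length E" by (simp_all add: B_def E_def)
    then have "(B ! r, E ! r) \<in> set gaps"
      by (metis B_def E_def gaps_def length_zip min_less_iff_conj nth_mem nth_zip)
    then have "stride (E ! r) div stride (B ! r) = prod_list (seg (B ! r) (E ! r))"
      using gap_bounds stride_split[of "B ! r" "E ! r"] stride_pos[of "B ! r"] by fastforce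
    then show "zip (map2 (div) (map stride E) (map stride B)) (map stride B) ! r
        = map (\<lambda>(b, e). (prod_list (seg b e), stride b)) (zip B E) ! r"
      using r by simp
  qed (simp add: B_def E_def)
  moreover have "gaps = zip B E" by (simp add: gaps_def B_def E_def)
  ultimately show ?thesis unfolding starts ends by simp
qed

lemma flat_coalesced_comp_modes: "flat_coalesced comp_modes"
proof -
  have "sorted_wrt (\<lambda>g g'. snd g \<in> set img \<and> Suc (snd g) \<le> fst g') ntgaps"
    unfolding ntgaps_def by (rule sorted_wrt_filter[OF sorted_gaps])
  then have "sorted_wrt (\<lambda>g g'. stride (fst g') \<noteq> prod_list (seg (fst g) (snd g)) * stride (fst g)) ntgaps"
  proof (rule sorted_wrt_mono_rel[rotated])
    fix g g' assume gs: "g \<in> set ntgaps" "g' \<in> set ntgaps"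
      and rel: "snd g \<in> set img \<and> Suc (snd g) \<le> fst g'"
    have g: "fst g \<le> snd g" "snd g \<le> m" "fst g' \<le> snd g'" "snd g' \<le> m"
      using gs gap_bounds by (auto simp: ntgaps_def)
    then have "prod_list (seg (fst g) (snd g)) * stride (fst g) = stride (snd g)"
      using stride_split[of "fst g" "snd g"] by simp
    moreover have "stride (snd g) < stride (fst g')" using rel g by (intro stride_less_if_img) auto
    ultimately show "stride (fst g') \<noteq> prod_list (seg (fst g) (snd g)) * stride (fst g)" by simp
  qed
  then have "unmergeable comp_modes"
    unfolding comp_modes_def
    by (intro unmergeable_if_sorted_wrt)
      (auto simp: sorted_wrt_map case_prod_unfold elim: sorted_wrt_mono_rel[rotated])
  then show ?thesis by (auto simp: flat_coalesced_iff comp_modes_def ntgaps_def nontrivial_def)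
qed

lemma lcomplement_eq:
  assumes "lflat Lg = image_modes stride"
  shows "lcomplement Lg (prod_list ts) = layout_of_flat comp_modes"
proof -
  have squeezed: "squeeze (image_modes stride) = image_modes stride"
    using ss_neq_1 by (intro squeeze_id) (auto simp: image_modes_def)
  have "squeeze (map (\<lambda>(b, e). (prod_list (seg b e), stride b)) gaps) = comp_modes"
    by (simp add: squeeze_def comp_modes_def ntgaps_def nontrivial_def[abs_def] filter_map o_def
        case_prod_unfold)
  then have coalesced: "coal_flat (map (\<lambda>(b, e). (prod_list (seg b e), stride b)) gaps) = comp_modes"
    using flat_coalesced_comp_modes by (simp add: coal_flat_def flat_coalesced_iff merge_modes_id)
  have "lcomplement Lg (prod_list ts) = coal (layout_of_flat comp_modes)"
    unfolding lcomplement_def Let_def assms squeezed lsort_image_modes_stride complement_candidate_eq coalesced ..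
  also have "\<dots> = layout_of_flat comp_modes"
    using coal_layout_of_flat_coal_flat[of comp_modes] coal_flat_id[OF flat_coalesced_comp_modes] by simp
  finally show ?thesis .
qed

lemma map_perm:
  "map (\<lambda>j. (ts ! j, v j)) perm = image_modes v @ concat (map (\<lambda>(b, e). block v b e) ntgaps)"
  using a_shape by (simp add: perm_def image_modes_def block_def map_concat case_prod_unfold o_def)

lemma trivial_shape_1: "j \<in> set trivial \<Longrightarrow> ts ! j = 1"
proof -
  assume "j \<in> set trivial"
  then obtain b e where g: "(b, e) \<in> set gaps" "\<not> nontrivial (b, e)" "j \<in> set [b..<e]"
    by (auto simp: trivial_def)
  then have "prod_list (seg b e) = 1" by (simp add: nontrivial_def)
  moreover have "ts ! j \<in> set (seg b e)" using g by (auto simp: seg_def)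
  ultimately show "ts ! j = 1" by (rule prod_list_eq1)
qed

lemma perm_trivial_permutes: "distinct (perm @ trivial) \<and> set (perm @ trivial) = {..<m}"
proof -
  have "mset (concat (map (\<lambda>(b, e). [b..<e]) ntgaps)) + mset trivial = mset missing"
    unfolding ntgaps_def trivial_def concat_gaps_eq_missing[symmetric] by (rule mset_concat_filter)
  moreover have "mset img + mset missing = mset [0..<m]"
    unfolding img_def missing_def by (metis mset_filter multiset_partition)
  ultimately have "mset (perm @ trivial) = mset [0..<m]"
    using mset_map_a by (simp add: perm_def add.assoc)
  then show ?thesis
    by (metis atLeast0LessThan distinct_upt mset_eq_imp_distinct_iff mset_eq_setD set_upt)
qed

lemma phi_flat_perm_trivial:
  "phi_flat (map (\<lambda>j. (ts ! j, v j)) (perm @ trivial)) = phi_flat (map (\<lambda>j. (ts ! j, v j)) perm)"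
proof -
  have "phi_flat (map (\<lambda>j. (ts ! j, v j)) trivial) y = 0" for y
    using trivial_shape_1 by (intro phi_flat_ones) auto
  then show ?thesis by (simp add: phi_flat_append fun_eq_iff)
qed

lemma phi_flat_block_stride:
  "b \<le> e \<Longrightarrow> e \<le> m \<Longrightarrow> y < prod_list (seg b e) \<Longrightarrow> phi_flat (block stride b e) y = y * stride b"
proof (induction "e - b" arbitrary: b y)
  case 0
  then show ?case by (simp add: block_def seg_def)
next
  case (Suc d)
  then have b: "b < e" "b < m" by simp_all
  then have up: "[b..<e] = b # [Suc b..<e]" by (simp add: upt_conv_Cons)
  have tb: "0 < ts ! b" using ts_pos Suc by simp
  have "y < ts ! b * prod_list (seg (Suc b) e)" using Suc.prems(3) up by (simp add: seg_def)
  then have "y div ts ! b < prod_list (seg (Suc b) e)"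
    using tb by (simp add: div_less_iff_less_mult mult.commute)
  then have IH: "phi_flat (block stride (Suc b) e) (y div ts ! b) = y div ts ! b * stride (Suc b)"
    using Suc by simp
  have "phi_flat (block stride b e) y = y mod ts ! b * stride b + y div ts ! b * (stride b * ts ! b)"
    using up IH stride_Suc[OF b(2)] by (simp add: block_def phi_flat_Cons)
  also have "\<dots> = (y mod ts ! b + ts ! b * (y div ts ! b)) * stride b"
    by (simp only: add_mult_distrib add_mult_distrib2 mult.commute mult.left_commute)
  finally show ?case by (simp only: mod_mult_div_eq)
qed

lemma flat_equiv_block_stride:
  assumes "b \<le> e" "e \<le> m"
  shows "flat_equiv [(prod_list (seg b e), stride b)] (block stride b e)"
proof -
  have fsize: "fsize (block stride b e) = prod_list (seg b e)" by (simp add: block_def seg_def o_def)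
  have "phi_flat (block stride b e) y = y mod prod_list (seg b e) * stride b" for y
  proof -
    have "\<forall>p\<in>set (block stride b e). 0 < fst p" using ts_pos assms by (auto simp: block_def)
    then have "phi_flat (block stride b e) y = phi_flat (block stride b e) (y mod prod_list (seg b e))"
      using phi_flat_mod fsize by metis
    also have "\<dots> = y mod prod_list (seg b e) * stride b"
      using phi_flat_block_stride[OF assms] prod_seg_pos[OF assms(2)] by simp
    finally show ?thesis .
  qed
  then show ?thesis using fsize by (simp add: flat_equiv_def phi_flat_Cons fun_eq_iff)
qed

lemma phi_flat_divisor:
  "phi_flat (image_modes stride @ comp_modes) = phi_flat (map (\<lambda>j. (ts ! j, stride j)) (perm @ trivial))"
proof -
  have "flat_equiv (concat (image_modes stride # map (\<lambda>(b, e). [(prod_list (seg b e), stride b)]) ntgaps))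
      (concat (image_modes stride # map (\<lambda>(b, e). block stride b e) ntgaps))"
    using gap_bounds
    by (intro flat_equiv_concat)
      (auto simp: flat_equiv_refl list.rel_map list_all2_same ntgaps_def intro!: flat_equiv_block_stride)
  then have "phi_flat (image_modes stride @ comp_modes) = phi_flat (map (\<lambda>j. (ts ! j, stride j)) perm)"
    by (simp add: flat_equiv_def comp_modes_def map_perm case_prod_unfold)
  then show ?thesis unfolding phi_flat_perm_trivial .
qed

lemma lflat_gap_layouts: "map lflat gap_layouts = map (\<lambda>(b, e). coal_flat (block w b e)) ntgaps"
proof -
  have "coal_flat (block w b e) \<noteq> []" if "(b, e) \<in> set ntgaps" for b e
    using that by (intro coal_flat_neq_Nil) (simp add: ntgaps_def nontrivial_def block_def seg_def o_def)
  then show ?thesis by (auto simp: gap_layouts_def lflat_layout_of_flat)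
qed

lemma congruent_gap_layouts: "\<forall>L\<in>set gap_layouts. congruent (fst L) (snd L)"
  by (auto simp: gap_layouts_def congruent_layout_of_flat)

lemma phi_flat_quotient:
  "phi_flat (image_modes w @ lflat (graft gap_layouts)) = phi_flat (map (\<lambda>j. (ts ! j, w j)) (perm @ trivial))"
proof -
  have "flat_equiv (concat (image_modes w # map (\<lambda>(b, e). coal_flat (block w b e)) ntgaps))
      (concat (image_modes w # map (\<lambda>(b, e). block w b e) ntgaps))"
    by (intro flat_equiv_concat)
      (auto simp: flat_equiv_refl list.rel_map list_all2_same flat_equiv_coal_flat)
  then have "phi_flat (image_modes w @ lflat (graft gap_layouts)) = phi_flat (map (\<lambda>j. (ts ! j, w j)) perm)"
    using phi_flat_append_lflat_graft[OF congruent_gap_layouts] lflat_gap_layouts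
    by (simp add: flat_equiv_def map_perm case_prod_unfold)
  then show ?thesis unfolding phi_flat_perm_trivial .
qed

lemma gap_layouts_props:
  "list_all2 (\<lambda>L q. lsize L = fst q \<and> coalesced L \<and> congruent (fst L) (snd L)) gap_layouts comp_modes"
  unfolding gap_layouts_def comp_modes_def list.rel_map
proof (rule list_all2_same[THEN iffD2], clarify)
  fix b e assume "(b, e) \<in> set ntgaps"
  then have "e \<le> m" using gap_bounds by (force simp: ntgaps_def)
  then have "\<forall>p\<in>set (coal_flat (block w b e)). 0 < fst p"
    using ts_pos by (intro coal_flat_pos) (auto simp: block_def)
  then have "coalesced (layout_of_flat (coal_flat (block w b e)))"
    using flat_coalesced_coal_flat[of "block w b e"] flat_coalesced_shapes_gt_1
    by (intro coalesced_layout_of_flat) (auto simp: flat_coalesced_iff)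
  moreover have "lsize (layout_of_flat (coal_flat (block w b e))) = prod_list (seg b e)"
    by (simp add: lsize_layout_of_flat fsize_coal_flat block_def seg_def o_def)
  ultimately show "lsize (layout_of_flat (coal_flat (block w b e))) = fst (prod_list (seg b e), stride b)
    \<and> coalesced (layout_of_flat (coal_flat (block w b e)))
    \<and> congruent (fst (layout_of_flat (coal_flat (block w b e)))) (snd (layout_of_flat (coal_flat (block w b e))))"
    using congruent_layout_of_flat by simp
qed

text \<open>Trivial gaps consist of shape-1 modes only, which coalescing discards.\<close>

lemma squeeze_missing:
  "squeeze (map (\<lambda>j. (ts ! j, w j)) missing) = squeeze (concat (map (\<lambda>(b, e). block w b e) ntgaps))"
proof -
  have "squeeze (block w b e) = []" if "(b, e) \<in> set gaps" "\<not> nontrivial (b, e)" for b e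
  proof -
    have "ts ! j = 1" if "j \<in> set [b..<e]" for j
      using trivial_shape_1 that \<open>(b, e) \<in> set gaps\<close> \<open>\<not> nontrivial (b, e)\<close>
      by (force simp: trivial_def)
    then show ?thesis by (simp add: squeeze_def block_def filter_empty_conv)
  qed
  then have "concat (map (\<lambda>(b, e). squeeze (block w b e)) (filter nontrivial gaps))
      = concat (map (\<lambda>(b, e). squeeze (block w b e)) gaps)"
    by (intro concat_map_filter_eq) auto
  moreover have "map (\<lambda>j. (ts ! j, w j)) missing = concat (map (\<lambda>(b, e). block w b e) gaps)"
    unfolding concat_gaps_eq_missing[symmetric] by (simp add: map_concat block_def case_prod_unfold o_def)
  ultimately show ?thesis by (simp add: squeeze_concat ntgaps_def case_prod_unfold o_def)
qed

lemma coal_flat_quotient: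
  "coal_flat (image_modes w @ lflat (graft gap_layouts)) = coal_flat (image_modes w @ map (\<lambda>j. (ts ! j, w j)) missing)"
proof -
  have "coal_flat (image_modes w @ lflat (graft gap_layouts))
      = coal_flat (image_modes w @ concat (map coal_flat (map (\<lambda>(b, e). block w b e) ntgaps)))"
    using coal_flat_append_lflat_graft[OF congruent_gap_layouts] lflat_gap_layouts
    by (simp add: case_prod_unfold o_def)
  also have "\<dots> = coal_flat (image_modes w @ concat (map (\<lambda>(b, e). block w b e) ntgaps))"
    by (rule coal_flat_append_concat_coal_flat)
  also have "\<dots> = coal_flat (image_modes w @ map (\<lambda>j. (ts ! j, w j)) missing)"
    using squeeze_missing by (simp add: coal_flat_def)
  finally show ?thesis .
qed

end

section \<open>Logical division of layouts of flat divisions\<close>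

locale layout_division = flat_division +
  fixes S Dg Df :: ntuple and Lf :: layout
  assumes congruent_S_Dg: "congruent S Dg" and congruent_S_Df: "congruent S Df"
    and flat_S: "flat S = ss"
    and flat_Dg: "flat Dg = map (\<lambda>i. stride (a i)) [0..<length ss]"
    and flat_Df: "flat Df = map (\<lambda>i. w (a i)) [0..<length ss]"
    and lflat_Lf: "lflat Lf = map (\<lambda>j. (ts ! j, w j)) [0..<length ts]"
    and lsize_Lf: "lsize Lf = prod_list ts"
begin

definition divisor :: layout where
  "divisor = lconcat (S, Dg) (layout_of_flat comp_modes)"

definition quotient :: layout where
  "quotient = lconcat (S, Df) (graft gap_layouts)"

lemma lflat_S_Dg: "lflat (S, Dg) = image_modes stride"
  using flat_S flat_Dg by (simp add: lflat_def image_modes_def zip_map_upt)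

lemma lflat_quotient: "lflat quotient = image_modes w @ lflat (graft gap_layouts)"
proof -
  have "lflat (S, Df) = image_modes w"
    using flat_S flat_Df by (simp add: lflat_def image_modes_def zip_map_upt)
  then show ?thesis
    using congruent_S_Df graft_props(3)[OF gap_layouts_props] by (simp add: quotient_def lflat_lconcat)
qed

lemma ldivide_eq: "ldivide Lf (S, Dg) = lcompose Lf divisor"
  by (simp add: ldivide_def divisor_def lsize_Lf lcomplement_eq[OF lflat_S_Dg])

lemma phi_divisor: "phi divisor = phi_flat (map (\<lambda>j. (ts ! j, stride j)) (perm @ trivial))"
proof -
  have "lflat divisor = image_modes stride @ lflat (layout_of_flat comp_modes)"
    using congruent_S_Dg congruent_layout_of_flat by (simp add: divisor_def lflat_lconcat lflat_S_Dg)
  then have "phi divisor = phi_flat (image_modes stride @ comp_modes)"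
    using phi_layout_of_flat[of comp_modes] by (simp add: phi_def phi_flat_append fun_eq_iff)
  then show ?thesis by (simp add: phi_flat_divisor)
qed

lemma phi_quotient: "phi quotient = phi_flat (map (\<lambda>j. (ts ! j, w j)) (perm @ trivial))"
  by (simp add: phi_def lflat_quotient phi_flat_quotient)

lemma valid_quotient: "valid_layout quotient"
  unfolding valid_layout_iff_lflat
proof
  show "congruent (fst quotient) (snd quotient)"
    using congruent_S_Df graft_props(3)[OF gap_layouts_props] by (simp add: quotient_def lconcat_def)
  have "\<forall>p\<in>set (image_modes w). 0 < fst p"
    using ss_gt_1 by (auto simp: image_modes_def intro!: order.strict_trans[OF zero_less_one] nth_mem)
  moreover have "\<forall>p\<in>set (coal_flat (block w b e)). 0 < fst p" if "(b, e) \<in> set ntgaps" for b e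
  proof -
    have "e \<le> m" using that gap_bounds by (force simp: ntgaps_def)
    then show ?thesis using ts_pos by (intro coal_flat_pos) (auto simp: block_def)
  qed
  ultimately show "\<forall>p\<in>set (lflat quotient). 0 < fst p"
    using lflat_graft[OF congruent_gap_layouts] lflat_gap_layouts
    by (fastforce simp: lflat_quotient split: if_splits)
qed

lemma refines_quotient: "refines (fst quotient) (fst divisor)"
  using refines_refl[of S] graft_props(1)[OF gap_layouts_props]
  by (simp add: quotient_def divisor_def lconcat_def)

lemma coalesced_over_quotient: "coalesced_over (fst quotient) (snd quotient) (fst divisor)"
proof -
  have "coalesced_over S Df S" using congruent_S_Df ss_gt_1 flat_S by (intro coalesced_over_refl) auto
  then show ?thesis
    using graft_props(2)[OF gap_layouts_props]
    by (simp add: quotient_def divisor_def lconcat_def less_Suc_eq)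
qed

lemma lcompose_divisor: "lcompose Lf divisor = quotient"
proof (rule lcompose_eqI[OF valid_quotient refines_quotient coalesced_over_quotient])
  note permuted = phi_flat_permuted[OF ts_pos perm_trivial_permutes[THEN conjunct1]
      perm_trivial_permutes[THEN conjunct2], of _ w]
  show "\<forall>x < lsize divisor. phi divisor x < lsize Lf"
    using permuted by (simp add: phi_divisor lsize_Lf stride_def)
  have "phi Lf = phi_flat (map (\<lambda>j. (ts ! j, w j)) [0..<m])" by (simp add: phi_def lflat_Lf)
  then show "\<forall>x < lsize divisor. phi quotient x = phi Lf (phi divisor x)"
    using permuted by (simp add: phi_divisor phi_quotient stride_def)
qed

lemma coal_ldivide:
  "coal (ldivide Lf (S, Dg)) = layout_of_flat (coal_flat (image_modes w @ map (\<lambda>j. (ts ! j, w j)) missing))"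
  by (simp add: ldivide_eq lcompose_divisor coal_def lflat_quotient coal_flat_quotient)

end

section \<open>Layouts of nested tuple morphisms\<close>

definition morph_stride :: "ntuple \<Rightarrow> (nat \<Rightarrow> nat option) \<Rightarrow> nat \<Rightarrow> nat" where
  "morph_stride T \<alpha> i = (case \<alpha> i of None \<Rightarrow> 0 | Some j \<Rightarrow> prod_list (take j (flat T)))"

lemma mlayout_eq: "mlayout (S, T, \<alpha>) = (S, fill S (map (morph_stride T \<alpha>) [0..<len S]))"
  unfolding mlayout_def mdom_def mmap_def mcod_def morph_stride_def[abs_def] fst_conv snd_conv ..

lemma lflat_mlayout:
  "lflat (mlayout h) = zip (flat (mdom h)) (map (morph_stride (mcod h) (mmap h)) [0..<len (mdom h)])"
  unfolding mlayout_def morph_stride_def[abs_def] by (simp add: lflat_def flat_fill len_def)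

lemma lflat_mlayout_mdivide:
  assumes "complementable (S, T, \<alpha>)"
  shows "lflat (mlayout (mdivide (T, U, \<beta>) (S, T, \<alpha>)))
    = zip (flat S) (map (\<lambda>i. morph_stride U \<beta> (the (\<alpha> i))) [0..<len S])
      @ map (\<lambda>j. (flat T ! j, morph_stride U \<beta> j)) (missing_idx (S, T, \<alpha>))"
proof -
  let ?h = "mdivide (T, U, \<beta>) (S, T, \<alpha>)" and ?js = "missing_idx (S, T, \<alpha>)"
  have dom: "flat (mdom ?h) = flat S @ map (nth (flat T)) ?js"
    by (simp add: mdivide_def mcompose_def mconcat_def mcomplement_def mdom_def mcod_def Let_def o_def)
  have cod: "mcod ?h = U"
    by (simp add: mdivide_def mcompose_def mcod_def)
  have "mmap ?h i = \<beta> (if i < len S then the (\<alpha> i) else ?js ! (i - len S))"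
    if "i < len S + length ?js" for i
    using assms that by (auto simp: mdivide_def mcompose_def mconcat_def mcomplement_def mmap_def mdom_def
        complementable_def Let_def)
  then have "map (morph_stride (mcod ?h) (mmap ?h)) [0..<len (mdom ?h)]
      = map (\<lambda>i. morph_stride U \<beta> (the (\<alpha> i))) [0..<len S] @ map (morph_stride U \<beta>) ?js"
    by (intro nth_equalityI) (auto simp: dom cod len_def nth_append morph_stride_def)
  then show ?thesis by (simp add: lflat_mlayout dom zip_map_upt zip_map_map zip_same_conv_map flip: len_def)
qed

lemma flat_division_if_complementable:
  assumes "is_morph (S, T, \<alpha>)" "non_degenerate (S, T, \<alpha>)" "complementable (S, T, \<alpha>)"
  shows "flat_division (flat S) (flat T) (\<lambda>i. the (\<alpha> i))"
proof
  have \<alpha>: "\<forall>i<length (flat S). \<alpha> i = Some (the (\<alpha> i))"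
    using assms(3) by (auto simp: complementable_def mdom_def mmap_def len_def)
  show "\<forall>x\<in>set (flat T). 0 < x" using assms(1) by (simp add: is_morph_def positive_nt_def)
  show "inj_on (\<lambda>i. the (\<alpha> i)) {..<length (flat S)}"
    using assms(1) \<alpha> by (auto simp: is_morph_def len_def inj_on_def) metis
  show "\<forall>i<length (flat S). the (\<alpha> i) < length (flat T)"
    and "\<forall>i<length (flat S). flat S ! i = flat T ! the (\<alpha> i)"
    using assms(1) \<alpha> by (auto simp: is_morph_def len_def)
  show "\<forall>i<length (flat S). flat S ! i \<noteq> 1"
    using assms(2) \<alpha> by (auto simp: non_degenerate_def mdom_def mmap_def len_def)
qed

lemma missing_idx_eq:
  assumes "complementable (S, T, \<alpha>)"
  shows "missing_idx (S, T, \<alpha>) = filter (\<lambda>j. j \<notin> (\<lambda>i. the (\<alpha> i)) ` {..<len S}) [0..<len T]"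
proof -
  have "None \<notin> \<alpha> ` {..<len S}"
    using assms by (auto simp: complementable_def mdom_def mmap_def)
  then have "the ` (\<alpha> ` {..<len S} - {None}) = (\<lambda>i. the (\<alpha> i)) ` {..<len S}"
    by (simp add: image_image)
  then show ?thesis by (simp add: missing_idx_def mdom_def mmap_def mcod_def)
qed

theorem mainTheorem5:
  fixes S T U :: ntuple and \<alpha> \<beta> :: "nat \<Rightarrow> nat option"
  defines "g \<equiv> (S, T, \<alpha>)" and "f \<equiv> (T, U, \<beta>)"
  assumes "is_morph g" and "is_morph f"
    and "non_degenerate g" and "non_degenerate f"
    and "complementable g"
  shows "coal (mlayout (mdivide f g)) = coal (ldivide (mlayout f) (mlayout g))"
proof -
  define a where "a i = the (\<alpha> i)" for i
  define w where "w = morph_stride U \<beta>"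
  interpret flat_division "flat S" "flat T" a w
    using flat_division_if_complementable assms(3,5,7) unfolding g_def a_def[abs_def] by blast
  have strides_g: "map (morph_stride T \<alpha>) [0..<len S] = map (\<lambda>i. stride (a i)) [0..<len S]"
    using assms(7) by (auto simp: g_def complementable_def mdom_def mmap_def a_def
        morph_stride_def stride_def)
  have Lg: "mlayout g = (S, fill S (map (\<lambda>i. stride (a i)) [0..<len S]))"
    unfolding g_def mlayout_eq strides_g ..
  interpret layout_division "flat S" "flat T" a w S "fill S (map (\<lambda>i. stride (a i)) [0..<len S])"
    "fill S (map (\<lambda>i. w (a i)) [0..<len S])" "mlayout f"
    by unfold_locales
      (simp_all add: congruent_fill flat_fill len_def f_def mlayout_eq lflat_def w_def zip_map_upt
        lsize_def tsize_def)
  have "lflat (mlayout (mdivide f g)) = image_modes w @ map (\<lambda>j. (flat T ! j, w j)) missing"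
    using assms(7) lflat_mlayout_mdivide[of S T \<alpha> U \<beta>] missing_idx_eq[of S T \<alpha>]
    by (simp add: f_def g_def image_modes_def missing_def a_def w_def zip_map_upt len_def)
  then show ?thesis unfolding Lg coal_ldivide by (simp add: coal_def)
qed

end
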